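(* Let $k$ be an algebraically closed field of characteristic $p>2$, let $X$ be the smooth projective curve over $k$ with affine equation $y^2=x^p-x$, and $g=(p-1)/2$. Let $P_0=(0,0)$, let $P_\infty$ be the point at infinity, and let $\mathcal{U}=\{U_1,U_2\}$ with $U_1=X-P_0$, $U_2=X-P_\infty$. For $i=0,\dots,g-1$ let $\tau_i$ be the class of $(x^iy^{-1}dx,\;x^iy^{-1}dx,\;0)$ in $\check{H}^1_{dR}(\mathcal{U})$, and for $i=1,\dots,g$ let $\eta_i$ be the class of $$\big((1-2i)x^{1-g-i}\,d(yx^{-g-1}),\;-2ix^{2g-i}\,dy,\;yx^{-i}\big)$$ in $\check{H}^1_{dR}(\mathcal{U})$. Then these are well-defined elements, and $\{\tau_0,\dots,\tau_{g-1},\eta_1,\dots,\eta_g\}$ is a $k$-basis of $\check{H}^1_{dR}(\mathcal{U})$.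
   Context: $\check{H}^1_{dR}(\mathcal{U})$ (the Čech de Rham hypercohomology for the cover $\mathcal{U}$, canonically isomorphic to $H^1_{dR}(X/k)$) is the quotient of the $k$-vector space of triples $(\omega_1,\omega_2,f_{12})$ with $\omega_j\in\Omega^1_{X/k}(U_j)$, $f_{12}\in\mathcal{O}_X(U_1\cap U_2)$ and $df_{12}=\omega_1-\omega_2$, by the subspace of triples $(df_1,df_2,f_1-f_2)$ with $f_j\in\mathcal{O}_X(U_j)$. *)

theory Defs
  imports "HOL-Computational_Algebra.Computational_Algebra" "HOL-Library.Product_Plus"
begin

text \<open>The function field K = k(x)(y) is
  modelled as pairs (a,b) standing for a + b*y (K is a degree-2 extension of k(x)).
  Meromorphic 1-forms on X are h dx with h in K (dx is a K-basis of Omega_K);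
  a 1-form is represented by its dx-coefficient h.\<close>

type_synonym 'k rat = "'k poly fract"
type_synonym 'k fn = "'k rat \<times> 'k rat"

definition fx :: "'k::field rat" where "fx = Fract [:0,1:] 1"


text \<open>F = x^p - x, so y^2 = F.\<close>
definition fF :: "'k::field rat" where "fF = fx ^ CHAR('k) - fx"

definition fconst :: "'k::field \<Rightarrow> 'k rat" where "fconst c = Fract [:c:] 1"

definition fderiv :: "'k::field rat \<Rightarrow> 'k rat" where
  "fderiv r = (THE d. \<forall>p q. q \<noteq> 0 \<longrightarrow> r = Fract p q \<longrightarrow>
       d = Fract (pderiv p * q - p * pderiv q) (q * q))"

definition kconst :: "'k::field \<Rightarrow> 'k fn" where "kconst c = (fconst c, 0)"
definition kX :: "'k::field fn" where "kX = (fx, 0)"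
definition kY :: "'k::field fn" where "kY = (0, 1)"
definition kmul :: "'k::field fn \<Rightarrow> 'k fn \<Rightarrow> 'k fn" where
  "kmul u v = (fst u * fst v + snd u * snd v * fF, fst u * snd v + snd u * fst v)"
definition kinv :: "'k::field fn \<Rightarrow> 'k fn" where
  "kinv u = (let n = fst u ^ 2 - snd u ^ 2 * fF in (fst u / n, - snd u / n))"
definition ksmul :: "'k::field \<Rightarrow> 'k fn \<Rightarrow> 'k fn" where
  "ksmul c u = kmul (kconst c) u"

definition kpow :: "'k::field fn \<Rightarrow> nat \<Rightarrow> 'k fn" where
  "kpow u n = ((\<lambda>v. kmul u v) ^^ n) (1, 0)"
definition kpowi :: "'k::field fn \<Rightarrow> int \<Rightarrow> 'k fn" where
  "kpowi u n = (if n \<ge> 0 then kpow u (nat n) else kpow (kinv u) (nat (- n)))"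

text \<open>Exterior derivative d : K \<rightarrow> Omega_K, returned as dx-coefficient:
  d(a + b y) = (a' + (b' + b F'/(2F)) y) dx, using 2 y dy = F' dx.\<close>
definition kd :: "'k::field fn \<Rightarrow> 'k fn" where
  "kd u = (fderiv (fst u), fderiv (snd u) + snd u * fderiv fF / (2 * fF))"

datatype 'k pt = Aff 'k 'k | Inf

definition Xpts :: "'k::field pt set" where
  "Xpts = {Aff a b | a b. b ^ 2 = a ^ CHAR('k) - a} \<union> {Inf}"

text \<open>Affine coordinate ring k[x,y]/(y^2 - F): elements u0(x) + u1(x) y.\<close>
definition embA :: "'k::field poly \<times> 'k poly \<Rightarrow> 'k fn" where
  "embA u = (Fract (fst u) 1, Fract (snd u) 1)"
definition evalA :: "'k::field poly \<times> 'k poly \<Rightarrow> 'k \<Rightarrow> 'k \<Rightarrow> 'k" where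
  "evalA u a b = poly (fst u) a + poly (snd u) a * b"

text \<open>Chart at infinity: t = 1/x, s = y/x^(g+1), with s^2 = t - t^p; infinity is (t,s) = (0,0).\<close>
definition tInf :: "'k::field fn" where "tInf = kinv kX"
definition sInf :: "'k::field fn" where
  "sInf = kmul kY (kpow (kinv kX) ((CHAR('k) - 1) div 2 + 1))"
definition polyK :: "'k::field poly \<Rightarrow> 'k fn \<Rightarrow> 'k fn" where
  "polyK u z = foldr (\<lambda>c acc. kconst c + kmul z acc) (coeffs u) 0"
definition embB :: "'k::field poly \<times> 'k poly \<Rightarrow> 'k fn" where
  "embB u = polyK (fst u) tInf + kmul (polyK (snd u) tInf) sInf"

fun reg_at :: "'k::field pt \<Rightarrow> 'k fn \<Rightarrow> bool" where
  "reg_at (Aff a b) h = (\<exists>u v. evalA v a b \<noteq> 0 \<and> kmul h (embA v) = embA u)"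
| "reg_at Inf h = (\<exists>u v. poly (fst v) 0 \<noteq> 0 \<and> kmul h (embB v) = embB u)"

fun dreg_at :: "'k::field pt \<Rightarrow> 'k fn \<Rightarrow> bool" where
  "dreg_at (Aff a b) w = (\<exists>\<alpha> \<beta>. reg_at (Aff a b) \<alpha> \<and> reg_at (Aff a b) \<beta> \<and>
       w = kmul \<alpha> (kd kX) + kmul \<beta> (kd kY))"
| "dreg_at Inf w = (\<exists>\<alpha> \<beta>. reg_at Inf \<alpha> \<and> reg_at Inf \<beta> \<and>
       w = kmul \<alpha> (kd tInf) + kmul \<beta> (kd sInf))"

definition regO :: "'k::field pt set \<Rightarrow> 'k fn set" where
  "regO U = {h. \<forall>Q\<in>U. reg_at Q h}"
definition regOmega :: "'k::field pt set \<Rightarrow> 'k fn set" where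
  "regOmega U = {w. \<forall>Q\<in>U. dreg_at Q w}"

definition U1 :: "'k::field pt set" where "U1 = Xpts - {Aff 0 0}"
definition U2 :: "'k::field pt set" where "U2 = Xpts - {Inf}"

type_synonym 'k triple = "'k fn \<times> 'k fn \<times> 'k fn"

definition ZdR :: "'k::field triple set" where
  "ZdR = {(w1, w2, f12). w1 \<in> regOmega U1 \<and> w2 \<in> regOmega U2 \<and>
            f12 \<in> regO (U1 \<inter> U2) \<and> kd f12 = w1 - w2}"
definition BdR :: "'k::field triple set" where
  "BdR = {(kd f1, kd f2, f1 - f2) | f1 f2. f1 \<in> regO U1 \<and> f2 \<in> regO U2}"

definition tsmul :: "'k::field \<Rightarrow> 'k triple \<Rightarrow> 'k triple" where
  "tsmul c t = (ksmul c (fst t), ksmul c (fst (snd t)), ksmul c (snd (snd t)))"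

definition genus :: "'k::field itself \<Rightarrow> nat" where "genus _ = (CHAR('k) - 1) div 2"

definition tau :: "'k::field itself \<Rightarrow> nat \<Rightarrow> 'k triple" where
  "tau _ i = (let w = kmul (kpow kX i) (kinv kY) :: 'k fn in (w, w, 0))"

definition eta :: "'k::field itself \<Rightarrow> nat \<Rightarrow> 'k triple" where
  "eta K i = (let g = int (genus K); j = int i in
     (kmul (kconst (of_int (1 - 2 * j)))
        (kmul (kpowi kX (1 - g - j)) (kd (kmul kY (kpowi kX (- g - 1))))),
      kmul (kconst (of_int (- 2 * j))) (kmul (kpowi kX (2 * g - j)) (kd kY)),
      kmul kY (kpowi kX (- j)) :: 'k fn))"

end

theory Submission
  imports Defs
begin

text \<open>
  Regularity at an affine
  point (a, b) reduces to a and b having no pole at x = a: combine the function with its conjugate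
  under y \<mapsto> -y, and use that F = x^p - x has only simple roots. Regularity at infinity becomes a
  degree bound in the chart t = 1/x, s = y/x^(g+1).

  Given a cocycle (w1, w2, f), expand f in powers of x (it has poles only at x = 0 on U1 \<inter> U2):
  the terms of low order give a function regular on U1, the polynomial part one regular on U2,
  and the remaining terms y x^-i with 1 \<le> i \<le> g are the third components of the \<eta>_i.
  Subtracting these leaves a cocycle (w, w, 0) with w a global regular differential; these are
  exactly P(x) dx/y with deg P < g, i.e. combinations of the \<tau>_i. Conversely, if a combination
  of the \<tau>_i and \<eta>_i is a coboundary, the order of pole at infinity of the third component
  forces all \<eta>-coefficients to vanish, and then \<Sum> c_i \<tau>_i is the differential of a
  constant, so all c_i vanish too.
\<close>

section \<open>Differentiation of rational functions\<close>

lemma fx_eq_to_fract: "fx = to_fract [:0,1:]" by (simp add: fx_def to_fract_def)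
lemma fconst_eq_to_fract: "fconst c = to_fract [:c:]" by (simp add: fconst_def to_fract_def)
lemma fx_nz[simp]: "fx \<noteq> (0::'k::field rat)" by (simp add: fx_eq_to_fract)
lemma to_fract_power: "to_fract (x ^ n) = to_fract x ^ n" by (induct n) simp_all
lemma to_fract_x_power: "to_fract ([:0,1:] ^ m) = (fx ^ m :: 'k::field rat)"
  by (simp add: to_fract_power fx_eq_to_fract)

lemma fderiv_Fract_well_defined:
  fixes p q p1 q1 :: "'k::field poly"
  assumes "q \<noteq> 0" "q1 \<noteq> 0" "Fract p q = Fract p1 q1"
  shows "Fract (pderiv p * q - p * pderiv q) (q * q) = Fract (pderiv p1 * q1 - p1 * pderiv q1) (q1 * q1)"
proof -
  have E1: "p * q1 = p1 * q" using assms by (simp add: eq_fract)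
  have E2: "pderiv p * q1 + p * pderiv q1 = pderiv p1 * q + p1 * pderiv q"
    using arg_cong[OF E1, of pderiv] by (simp add: pderiv_mult algebra_simps)
  have "(pderiv p * q - p * pderiv q) * (q1 * q1) = (pderiv p1 * q1 - p1 * pderiv q1) * (q * q)"
  proof -
    have "(pderiv p * q - p * pderiv q) * (q1 * q1) - (pderiv p1 * q1 - p1 * pderiv q1) * (q * q)
       = q * q1 * (pderiv p * q1 + p * pderiv q1 - pderiv p1 * q - p1 * pderiv q)
         + (pderiv q1 * q + pderiv q * q1) * (p1 * q - p * q1)"
      by (simp add: algebra_simps)
    also have "\<dots> = 0" using E1 E2 by simp
    finally show ?thesis by simp
  qed
  thus ?thesis using assms by (simp add: eq_fract)
qed

lemma fderiv_Fract:
  fixes p q :: "'k::field poly"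
  assumes "q \<noteq> 0"
  shows "fderiv (Fract p q) = Fract (pderiv p * q - p * pderiv q) (q * q)"
  unfolding fderiv_def
proof (rule the_equality)
  show "\<forall>p1 q1. q1 \<noteq> 0 \<longrightarrow> Fract p q = Fract p1 q1 \<longrightarrow>
     Fract (pderiv p * q - p * pderiv q) (q * q) = Fract (pderiv p1 * q1 - p1 * pderiv q1) (q1 * q1)"
    using fderiv_Fract_well_defined assms by blast
next
  fix d assume "\<forall>p1 q1. q1 \<noteq> 0 \<longrightarrow> Fract p q = Fract p1 q1 \<longrightarrow>
     d = Fract (pderiv p1 * q1 - p1 * pderiv q1) (q1 * q1)"
  thus "d = Fract (pderiv p * q - p * pderiv q) (q * q)" using assms by blast
qed

lemma fderiv_to_fract[simp]: "fderiv (to_fract p) = to_fract (pderiv p)"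
  by (simp add: to_fract_def fderiv_Fract)

lemma fderiv_add: "fderiv (r + s) = fderiv r + fderiv (s::'k::field rat)"
proof (cases r; cases s)
  fix a b c d assume *: "r = Fract a b" "b \<noteq> 0" "s = Fract c d" "d \<noteq> 0"
  show ?thesis using * by (simp add: fderiv_Fract pderiv_mult pderiv_add eq_fract algebra_simps)
qed

lemma fderiv_mult: "fderiv (r * s) = fderiv r * s + r * fderiv (s::'k::field rat)"
proof (cases r; cases s)
  fix a b c d assume *: "r = Fract a b" "b \<noteq> 0" "s = Fract c d" "d \<noteq> 0"
  show ?thesis using * by (simp add: fderiv_Fract pderiv_mult pderiv_add eq_fract algebra_simps)
qed

lemma fderiv_uminus: "fderiv (- r) = - fderiv (r::'k::field rat)"
proof (cases r)
  fix a b assume *: "r = Fract a b" "b \<noteq> 0"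
  show ?thesis using * by (simp add: fderiv_Fract pderiv_minus eq_fract algebra_simps)
qed

lemma fderiv_diff: "fderiv (r - s) = fderiv r - fderiv (s::'k::field rat)"
  using fderiv_add[of r "-s"] by (simp add: fderiv_uminus)
lemma fderiv_0[simp]: "fderiv 0 = (0::'k::field rat)"
  using fderiv_to_fract[of "0::'k poly"] by simp
lemma fderiv_1[simp]: "fderiv 1 = (0::'k::field rat)"
  using fderiv_to_fract[of "1::'k poly"] by simp
lemma fderiv_fconst[simp]: "fderiv (fconst c) = (0::'k::field rat)"
  by (simp add: fconst_eq_to_fract)
lemma fderiv_fx[simp]: "fderiv fx = (1::'k::field rat)"
  by (simp add: fx_eq_to_fract pderiv_pCons flip: one_pCons)

lemma fderiv_inverse: "fderiv (inverse r) = - fderiv r / (r*r::'k::field rat)"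
proof (cases "r = 0")
  case True thus ?thesis by simp
next
  case False
  have "fderiv (r * inverse r) = 0" using False by simp
  hence h: "fderiv r * inverse r + r * fderiv (inverse r) = 0" by (simp add: fderiv_mult)
  have "r * (fderiv r * inverse r + r * fderiv (inverse r)) = fderiv r + (r * r) * fderiv (inverse r)"
    using False by (simp add: algebra_simps)
  hence "fderiv r + (r * r) * fderiv (inverse r) = 0" using h by simp
  hence "(r * r) * fderiv (inverse r) = - fderiv r" by (simp add: eq_neg_iff_add_eq_0 add.commute)
  hence "fderiv (inverse r) * (r * r) = - fderiv r" by (simp add: mult.commute)
  hence "fderiv (inverse r) = - fderiv r / (r * r)" using False by (subst nonzero_eq_divide_eq) auto
  thus ?thesis by simp
qed

lemma fderiv_power: "fderiv (r ^ n) = of_nat n * r ^ (n - 1) * fderiv (r::'k::field rat)"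
proof (induction n)
  case 0 then show ?case by simp
next
  case (Suc n)
  then show ?case
    by (cases n) (simp_all add: fderiv_mult algebra_simps)
qed

lemma fderiv_power_int: "r \<noteq> 0 \<Longrightarrow> fderiv (r powi n) = of_int n * r powi (n - 1) * fderiv (r::'k::field rat)"
proof (cases "n \<ge> 0")
  case True
  assume r: "r \<noteq> 0"
  define m where "m = nat n"
  have m: "n = int m" using True m_def by simp
  show ?thesis
  proof (cases m)
    case 0 then show ?thesis using m by simp
  next
    case (Suc k)
    have "r powi (n - 1) = r ^ k" using m Suc by (simp flip: power_int_of_nat)
    moreover have "r powi n = r ^ Suc k" using m Suc by (simp only: power_int_of_nat)
    ultimately show ?thesis using m r Suc by (simp only: fderiv_power) simp
  qed
next
  case False
  assume r: "r \<noteq> 0"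
  define m where "m = nat (- n)"
  have m: "n = - int m" "m > 0" using False m_def by auto
  have e0: "r powi n = inverse (r ^ m)" using m by (simp add: power_int_minus)
  have e1: "r powi (n - 1) = inverse (r ^ (m + 1))"
  proof -
    have "n - 1 = - int (m + 1)" using m by simp
    thus ?thesis by (simp only: power_int_minus power_int_of_nat)
  qed
  have e2: "r ^ m * r ^ m = r ^ (m - 1) * r ^ (m+1)"
  proof -
    have "m + m = (m - 1) + (m + 1)" using m by simp
    thus ?thesis by (metis power_add)
  qed
  have nz: "r ^ (m - 1) \<noteq> 0" "r ^ (m + 1) \<noteq> 0" using r by auto
  have "fderiv (r powi n) = - (of_nat m * r ^ (m - 1) * fderiv r) / (r ^ m * r ^ m)"
    by (simp only: e0 fderiv_inverse fderiv_power)
  also have "\<dots> = (r ^ (m - 1) * (- of_nat m * fderiv r)) / (r ^ (m - 1) * r ^ (m+1))"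
    by (simp only: e2) (simp add: algebra_simps)
  also have "\<dots> = (- of_nat m * fderiv r) / r ^ (m+1)"
    by (rule nonzero_mult_divide_mult_cancel_left[OF nz(1)])
  also have "\<dots> = of_int n * inverse (r ^ (m + 1)) * fderiv r"
    using m by (simp add: divide_inverse)
  finally show ?thesis using e1 by simp
qed

lemma kmul_pair[simp]: "kmul (a,b) (c,d) = (a*c + b*d*fF, a*d + b*c)" by (simp add: kmul_def)
lemma kd_pair: "kd (a,b) = (fderiv a, fderiv b + b * fderiv fF / (2*fF))" by (simp add: kd_def)
lemma kconst_eq: "kconst c = (fconst c, 0)" by (simp add: kconst_def)
lemma ksmul_pair[simp]: "ksmul c (a,b) = (fconst c * a, fconst c * b)" by (simp add: ksmul_def kconst_def)
lemma fconst_0[simp]: "fconst 0 = (0::'k::field rat)" by (simp add: fconst_eq_to_fract)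
lemma fconst_1[simp]: "fconst 1 = (1::'k::field rat)" by (simp add: fconst_eq_to_fract flip: one_pCons)
lemma fconst_add: "fconst (a + b) = fconst a + (fconst b::'k::field rat)"
  by (simp add: fconst_eq_to_fract flip: to_fract_add)
lemma fconst_mult: "fconst (a * b) = fconst a * (fconst b::'k::field rat)"
  by (simp add: fconst_eq_to_fract flip: to_fract_mult)
lemma fconst_uminus: "fconst (- a) = - (fconst a::'k::field rat)"
  by (simp add: fconst_eq_to_fract flip: to_fract_uminus)
lemma fconst_eq_0[simp]: "fconst a = (0::'k::field rat) \<longleftrightarrow> a = 0" by (simp add: fconst_eq_to_fract)
lemma fconst_of_nat: "fconst (of_nat n) = (of_nat n::'k::field rat)"
  by (induct n) (simp_all add: fconst_add)
lemma fconst_of_int: "fconst (of_int n) = (of_int n::'k::field rat)"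
  by (cases n rule: int_cases2) (simp_all add: fconst_of_nat fconst_uminus)
lemma kpow_rat: "kpow (r, 0) n = (r ^ n, 0::'k::field rat)"
  by (induct n) (simp_all add: kpow_def)
lemma kinv_rat: "kinv (r, 0) = (inverse r, 0::'k::field rat)"
  by (cases "r = 0") (simp_all add: kinv_def Let_def power2_eq_square field_simps)
lemma kpowi_rat: "r \<noteq> 0 \<Longrightarrow> kpowi (r, 0) n = (r powi n, 0::'k::field rat)"
  by (simp add: kpowi_def kpow_rat kinv_rat power_int_def power_inverse)
lemma kpowi_kX: "kpowi kX n = (fx powi n, 0::'k::field rat)"
  by (simp add: kX_def kpowi_rat)
lemma kd_add: "kd (u + v) = kd u + (kd v :: 'k::field fn)"
  by (cases u; cases v) (simp add: kd_pair fderiv_add add_divide_distrib algebra_simps)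
lemma kd_diff: "kd (u - v) = kd u - (kd v :: 'k::field fn)"
  by (cases u; cases v) (simp add: kd_pair fderiv_diff diff_divide_distrib algebra_simps)
lemma kd_zero[simp]: "kd 0 = (0 :: 'k::field fn)"
  by (simp add: kd_pair zero_prod_def)
lemma kd_ksmul: "kd (ksmul c u) = ksmul c (kd (u :: 'k::field fn))"
  by (cases u) (simp add: kd_pair fderiv_mult algebra_simps)
lemma kd_kX: "kd kX = (1, 0::'k::field rat)" by (simp add: kX_def kd_pair)
lemma kd_kY_fderiv: "kd kY = (0, fderiv fF / (2*fF)::'k::field rat)" by (simp add: kY_def kd_pair)
lemma ksmul_diff: "ksmul c (u - v) = ksmul c u - ksmul c (v::'k::field fn)"
  by (cases u; cases v) (simp add: algebra_simps)
lemma ksmul_0[simp]: "ksmul 0 u = (0::'k::field fn)"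
  by (cases u) (simp add: zero_prod_def)
lemma ksmul_zero[simp]: "ksmul c 0 = (0::'k::field fn)"
  by (simp add: zero_prod_def)
lemma kmul_comm: "kmul u v = kmul v (u::'k::field fn)"
  by (cases u; cases v) (simp add: algebra_simps)
lemma kmul_assoc: "kmul (kmul u v) w = kmul u (kmul v (w::'k::field fn))"
  by (cases u; cases v; cases w) (simp add: algebra_simps)
lemma kmul_add_left: "kmul (u + v) w = kmul u w + kmul v (w::'k::field fn)"
  by (cases u; cases v; cases w) (simp add: algebra_simps)
lemma kmul_add_right: "kmul w (u + v) = kmul w u + kmul w (v::'k::field fn)"
  by (cases u; cases v; cases w) (simp add: algebra_simps)
lemma kmul_uminus_left: "kmul (- u) w = - kmul u (w::'k::field fn)"
  by (cases u; cases w) (simp add: algebra_simps)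
lemma kmul_0_left[simp]: "kmul 0 w = (0::'k::field fn)"
  by (cases w) (simp add: zero_prod_def)
lemma kmul_1_left[simp]: "kmul (1,0) w = (w::'k::field fn)"
  by (cases w) simp
lemma ksmul_kmul: "ksmul c u = kmul (fconst c, 0) u"
  by (simp add: ksmul_def kconst_def)
lemma kmul_rat_rat: "kmul (c, 0) (kmul (d, 0) w) = kmul (c * d, 0) (w::'k::field fn)"
  by (cases w) (simp add: algebra_simps)
lemma power_int_minus_nat: "x powi (- int n) = inverse x ^ n" for x :: "'a::field"
  by (simp add: power_int_minus power_inverse)
lemma inverse_fx_power_cancel: "inverse fx ^ n * fx ^ n = (1 :: 'k::field rat)"
  by (simp add: power_inverse)
lemma tsmul_triple: "tsmul c (a, b, d) = (ksmul c a, ksmul c b, ksmul c d)" by (simp add: tsmul_def)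
lemma sum_triple: "(\<Sum>i\<in>A. (f i, g i, h i)) = (sum f A, sum g A, sum h A)"
  by (induct A rule: infinite_finite_induct) (simp_all add: zero_prod_def)
lemma kd_sum: "kd (sum f A) = (\<Sum>i\<in>A. kd (f i :: 'k::field fn))"
  by (induct A rule: infinite_finite_induct) (simp_all add: kd_add)

lemma degree_x_power: "degree ([:0,1::'k::field:] ^ m) = m" by (simp add: degree_power_eq)
lemma degree_mod_x_power: "(P::'k::field poly) mod [:0,1:] ^ m = 0 \<or> degree (P mod [:0,1:] ^ m) < m"
  using degree_mod_less[of "[:0,1:] ^ m" P] by (simp add: degree_x_power)

lemma poly_split_x_powers:
  fixes B :: "'k::field poly"
  assumes "n \<le> m"
  obtains H Q R where "B = H * [:0,1:] ^ m + Q * [:0,1:] ^ (m - n) + R"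
    and "Q = 0 \<or> degree Q < n" and "R = 0 \<or> degree R < m - n"
proof -
  define X :: "'k poly" where "X = [:0,1:]"
  define Bm where "Bm = B mod X ^ m"
  define Q R where "Q = Bm div X ^ (m - n)" and "R = Bm mod X ^ (m - n)"
  have Bm_eq: "Bm = Q * X ^ (m - n) + R" unfolding Q_def R_def by (rule div_mult_mod_eq[symmetric])
  have B_eq: "B = (B div X ^ m) * X ^ m + Q * X ^ (m - n) + R"
    using div_mult_mod_eq[of B "X ^ m"] Bm_eq by (simp add: Bm_def add.assoc)
  have Bm: "Bm = 0 \<or> degree Bm < m" using degree_mod_x_power[of B m] by (simp add: Bm_def X_def)
  have R: "R = 0 \<or> degree R < m - n" using degree_mod_x_power[of Bm "m - n"] by (simp add: R_def X_def)
  have "Q = 0 \<or> degree Q < n"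
  proof (cases "Q = 0")
    case False
    have dQX: "degree (Q * X ^ (m - n)) = degree Q + (m - n)"
      using False by (simp add: degree_mult_eq X_def degree_x_power)
    have "degree Bm = degree Q + (m - n)"
    proof (cases "R = 0")
      case False
      hence "degree R < degree (Q * X ^ (m - n))" using R dQX by auto
      thus ?thesis using Bm_eq dQX by (simp add: degree_add_eq_left)
    qed (use Bm_eq dQX in simp)
    moreover have "Bm \<noteq> 0" using False by (auto simp: Q_def)
    ultimately show ?thesis using Bm assms by auto
  qed simp
  with that B_eq R show thesis by (simp add: X_def)
qed

lemma laurent_split:
  fixes B :: "'k::field poly"
  assumes "n \<le> m"
  obtains H Q R where "to_fract B / fx ^ m = to_fract H + to_fract Q / fx ^ n + to_fract R / fx ^ m"
    and "Q = 0 \<or> degree Q < n" and "R = 0 \<or> degree R < m - n"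
proof -
  obtain H Q R where B: "B = H * [:0,1:] ^ m + Q * [:0,1:] ^ (m - n) + R"
    and Q: "Q = 0 \<or> degree Q < n" and R: "R = 0 \<or> degree R < m - n"
    using poly_split_x_powers[OF assms] .
  have "fx ^ m = fx ^ (m - n) * (fx ^ n :: 'k rat)" using assms by (simp flip: power_add)
  hence "to_fract B / fx ^ m = to_fract H + to_fract Q / fx ^ n + to_fract R / fx ^ m"
    by (simp add: B to_fract_x_power field_simps)
  with Q R that show thesis by blast
qed

section \<open>Poles at finite points\<close>

definition no_pole :: "'k::field \<Rightarrow> 'k rat \<Rightarrow> bool" where
  "no_pole a r \<longleftrightarrow> (\<exists>n d. r = Fract n d \<and> poly d a \<noteq> 0)"
lemma no_pole_to_fract[simp]: "no_pole a (to_fract p)"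
  unfolding no_pole_def to_fract_def by (rule exI[of _ p], rule exI[of _ 1]) simp
lemma no_pole_fconst[simp]: "no_pole a (fconst c)" by (simp add: fconst_eq_to_fract)
lemma no_pole_fx[simp]: "no_pole a fx" by (simp add: fx_eq_to_fract)
lemma no_pole_0[simp]: "no_pole a 0" using no_pole_to_fract[of a 0] by simp
lemma no_pole_1[simp]: "no_pole a 1" using no_pole_to_fract[of a 1] by simp

lemma no_pole_mult: "no_pole a r \<Longrightarrow> no_pole a s \<Longrightarrow> no_pole a (r * s)"
proof -
  assume "no_pole a r" "no_pole a s"
  then obtain n d n' d' where *: "r = Fract n d" "poly d a \<noteq> 0" "s = Fract n' d'" "poly d' a \<noteq> 0"
    unfolding no_pole_def by blast
  hence "r * s = Fract (n * n') (d * d')" by auto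
  thus ?thesis unfolding no_pole_def using * by fastforce
qed

lemma no_pole_power: "no_pole a r \<Longrightarrow> no_pole a (r ^ n)"
  by (induct n) (simp_all add: no_pole_mult)

lemma inverse_fx: "inverse fx = (Fract 1 [:0,1:] :: 'k::field rat)"
proof -
  have "fx * Fract 1 [:0,1:] = (1 :: 'k rat)" by (simp add: fx_def eq_fract One_fract_def)
  thus ?thesis by (rule inverse_unique)
qed

lemma no_pole_inverse_fx: "a \<noteq> 0 \<Longrightarrow> no_pole a (inverse fx)"
  unfolding no_pole_def inverse_fx
  by (rule exI[of _ 1], rule exI[of _ "[:0,1:]"]) simp

lemma not_no_pole_Fract:
  assumes "r = Fract n d" "poly d a = 0" "poly n a \<noteq> 0" and dnz: "d \<noteq> 0"
  shows "\<not> no_pole a r"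
proof
  assume "no_pole a r"
  then obtain n1 d1 where 1: "r = Fract n1 d1" "poly d1 a \<noteq> 0" unfolding no_pole_def by blast
  have nnz: "n \<noteq> 0" using assms(3) by auto
  have d1nz: "d1 \<noteq> 0" using 1 by auto
  have eq: "n * d1 = n1 * d" using 1 assms(1) dnz d1nz by (simp add: eq_fract)
  have "order a (n * d1) = 0" using assms(3) 1(2) by (simp add: order_0I)
  moreover have "n * d1 \<noteq> 0" using nnz d1nz by simp
  hence "n1 \<noteq> 0" using eq by auto
  hence "order a (n1 * d) = order a n1 + order a d" using dnz by (simp add: order_mult)
  moreover have "order a d \<noteq> 0" using assms(2) dnz by (simp add: order_root)
  ultimately show False using eq by simp
qed

lemma no_pole_numerator_root: "no_pole a r \<Longrightarrow> r = Fract n d \<Longrightarrow> d \<noteq> 0 \<Longrightarrow> poly d a = 0 \<Longrightarrow> poly n a = 0"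
  using not_no_pole_Fract by blast

lemma Fract_coprime_at:
  fixes r :: "'k::field rat"
  assumes "r \<noteq> 0"
  shows "\<exists>n d. r = Fract n d \<and> d \<noteq> 0 \<and> (poly n a \<noteq> 0 \<or> poly d a \<noteq> 0)"
proof -
  obtain n d where nd: "r = Fract n d" "d \<noteq> 0" by (cases r) auto
  have nnz: "n \<noteq> 0" using nd assms by (auto simp: fract_collapse)
  define k where "k = min (order a n) (order a d)"
  obtain n' where n': "n = [:-a,1:] ^ order a n * n'" "\<not> [:-a,1:] dvd n'" using order_decomp[OF nnz] by blast
  obtain d' where d': "d = [:-a,1:] ^ order a d * d'" "\<not> [:-a,1:] dvd d'" using order_decomp[OF nd(2)] by blast
  define n'' d'' where "n'' = [:-a,1:] ^ (order a n - k) * n'" and "d'' = [:-a,1:] ^ (order a d - k) * d'"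
  have "n = [:-a,1:] ^ k * n''" "d = [:-a,1:] ^ k * d''"
    using n' d' by (simp_all add: n''_def d''_def k_def mult.assoc[symmetric] flip: power_add)
  hence "r = Fract n'' d''" using nd by (simp add: mult_fract_cancel)
  moreover have "d'' \<noteq> 0" using nd d' d''_def by auto
  moreover have "poly n'' a \<noteq> 0 \<or> poly d'' a \<noteq> 0"
  proof (cases "order a n \<le> order a d")
    case True
    hence "n'' = n'" by (simp add: n''_def k_def)
    thus ?thesis using n'(2) by (simp add: dvd_iff_poly_eq_0)
  next
    case False
    hence "d'' = d'" by (simp add: d''_def k_def)
    thus ?thesis using d'(2) by (simp add: dvd_iff_poly_eq_0)
  qed
  ultimately show ?thesis by blast
qed

lemma poly_nonzero_off_0:
  fixes d :: "'k::alg_closed_field poly"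
  assumes "d \<noteq> 0" and "\<forall>c. c \<noteq> 0 \<longrightarrow> poly d c \<noteq> 0"
  obtains q0 k where "q0 \<noteq> 0" and "d = [:0,1:] ^ k * [:q0:]"
proof -
  obtain q where "d = [:-0,1:] ^ order 0 d * q" "\<not> [:-0,1:] dvd q"
    using order_decomp[OF assms(1)] by blast
  hence q: "d = [:0,1:] ^ order 0 d * q" "\<not> [:0,1:] dvd q" by simp_all
  have "poly q c \<noteq> 0" for c
  proof (cases "c = 0")
    case True thus ?thesis using q(2) by (simp add: dvd_iff_poly_eq_0)
  next
    case False
    have "poly d c = poly ([:0,1:] ^ order 0 d) c * poly q c" using q(1) by (metis poly_mult)
    thus ?thesis using assms(2) False by (metis mult_zero_right)
  qed
  hence "degree q = 0" using alg_closed_imp_poly_has_root by (metis neq0_conv)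
  then obtain q0 where q0: "q = [:q0:]" by (rule degree_eq_zeroE)
  show thesis
  proof (rule that)
    show "q0 \<noteq> 0" using q(1) q0 assms(1) by auto
    show "d = [:0,1:] ^ order 0 d * [:q0:]" using q(1) q0 by simp
  qed
qed

lemma no_pole_off_0_laurent_Fract:
  fixes d :: "'k::alg_closed_field poly"
  shows "d \<noteq> 0 \<Longrightarrow> (\<forall>a. a \<noteq> 0 \<longrightarrow> no_pole a (Fract n d)) \<Longrightarrow> \<exists>n' m. Fract n d = to_fract n' / fx ^ m"
proof (induction "degree d" arbitrary: n d rule: less_induct)
  case less
  show ?case
  proof (cases "\<exists>c. c \<noteq> 0 \<and> poly d c = 0")
    case True
    \<comment> \<open>a nonzero root of the denominator is also a root of the numerator; cancel it\<close>
    then obtain c where c: "c \<noteq> 0" "poly d c = 0" by blast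
    have "poly n c = 0" using less.prems c no_pole_numerator_root by blast
    then obtain n1 where n1: "n = [:-c,1:] * n1" using poly_eq_0_iff_dvd by (metis dvdE)
    obtain d1 where d1: "d = [:-c,1:] * d1" using c poly_eq_0_iff_dvd by (metis dvdE)
    have d1nz: "d1 \<noteq> 0" using d1 less.prems by auto
    have fr: "Fract n d = Fract n1 d1"
      unfolding n1 d1 by (rule mult_fract_cancel) simp
    have "degree d = degree [:-c,1:] + degree d1" unfolding d1 using d1nz by (intro degree_mult_eq) simp_all
    hence "degree d1 < degree d" by simp
    thus ?thesis using less.hyps[of d1 n1] d1nz less.prems(2) fr by metis
  next
    case False
    then obtain q0 k where q0: "q0 \<noteq> 0" and d: "d = [:0,1:] ^ k * [:q0:]"
      using poly_nonzero_off_0[OF less.prems(1)] by blast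
    have "to_fract d = fx ^ k * fconst q0"
      by (simp only: d to_fract_mult to_fract_x_power fconst_eq_to_fract)
    hence "Fract n d = to_fract n / (fx ^ k * fconst q0)" by (simp only: Fract_conv_to_fract)
    also have "\<dots> = fconst (inverse q0) * to_fract n / fx ^ k"
      using q0 by (simp add: field_simps flip: fconst_mult)
    also have "fconst (inverse q0) * to_fract n = to_fract (smult (inverse q0) n)"
      by (simp add: fconst_eq_to_fract flip: to_fract_mult)
    finally show ?thesis by blast
  qed
qed

lemma no_pole_off_0_laurent:
  fixes r :: "'k::alg_closed_field rat"
  assumes "\<forall>a. a \<noteq> 0 \<longrightarrow> no_pole a r"
  shows "\<exists>n m. r = to_fract n / fx ^ m"
proof -
  obtain n d where "r = Fract n d" "d \<noteq> 0" by (cases r) auto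
  thus ?thesis using no_pole_off_0_laurent_Fract assms by blast
qed

lemma laurent_no_pole_0_poly:
  fixes n :: "'k::field poly"
  shows "no_pole 0 (to_fract n / fx ^ m) \<Longrightarrow> \<exists>n'. to_fract n / fx ^ m = to_fract n'"
proof (induction m arbitrary: n)
  case 0 thus ?case by auto
next
  case (Suc m)
  have "to_fract n / fx ^ Suc m = Fract n ([:0,1:] ^ Suc m)"
    by (simp only: Fract_conv_to_fract to_fract_x_power)
  hence "poly n 0 = 0" using Suc.prems no_pole_numerator_root[of 0 _ n "[:0,1:] ^ Suc m"] by simp
  then obtain n1 where n1: "n = [:0,1:] * n1" by (metis dvd_iff_poly_eq_0 dvdE minus_zero)
  have "to_fract n = fx * to_fract n1" using n1 by (simp only: fx_eq_to_fract to_fract_mult)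
  hence "to_fract n / fx ^ Suc m = (fx * to_fract n1) / (fx * fx ^ m)" by simp
  also have "\<dots> = to_fract n1 / fx ^ m" by (rule mult_divide_mult_cancel_left) simp
  finally have "to_fract n / fx ^ Suc m = to_fract n1 / fx ^ m" .
  thus ?case using Suc.IH Suc.prems by metis
qed

lemma no_pole_everywhere_poly:
  fixes r :: "'k::alg_closed_field rat"
  assumes "\<forall>a. no_pole a r"
  shows "\<exists>n. r = to_fract n"
  using no_pole_off_0_laurent[of r] assms laurent_no_pole_0_poly by metis

lemma no_pole_fderiv: "no_pole a r \<Longrightarrow> no_pole a (fderiv r)"
proof -
  assume "no_pole a r"
  then obtain n d where 1: "r = Fract n d" "poly d a \<noteq> 0" unfolding no_pole_def by blast
  hence "d \<noteq> 0" by auto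
  hence "fderiv r = Fract (pderiv n * d - n * pderiv d) (d * d)" using 1 by (simp add: fderiv_Fract)
  thus ?thesis using 1 unfolding no_pole_def by fastforce
qed

section \<open>Degree at infinity\<close>

definition fract_deg :: "'k::field rat \<Rightarrow> int" where
  "fract_deg r = (SOME e. \<exists>n d. r = Fract n d \<and> n \<noteq> 0 \<and> d \<noteq> 0 \<and> e = int (degree n) - int (degree d))"

lemma fract_deg_Fract:
  fixes n d :: "'k::field poly"
  assumes "n \<noteq> 0" "d \<noteq> 0"
  shows "fract_deg (Fract n d) = int (degree n) - int (degree d)"
  unfolding fract_deg_def
proof (rule some_equality)
  show "\<exists>n' d'. Fract n d = Fract n' d' \<and> n' \<noteq> 0 \<and> d' \<noteq> 0 \<and> int (degree n) - int (degree d) = int (degree n') - int (degree d')"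
    using assms by blast
next
  fix e assume "\<exists>n' d'. Fract n d = Fract n' d' \<and> n' \<noteq> 0 \<and> d' \<noteq> 0 \<and> e = int (degree n') - int (degree d')"
  then obtain n' d' where *: "Fract n d = Fract n' d'" "n' \<noteq> 0" "d' \<noteq> 0" "e = int (degree n') - int (degree d')" by blast
  hence "n * d' = n' * d" using assms by (simp add: eq_fract)
  hence "degree (n * d') = degree (n' * d)" by simp
  hence "degree n + degree d' = degree n' + degree d" using assms * by (simp add: degree_mult_eq)
  thus "e = int (degree n) - int (degree d)" using * by simp
qed

lemma fract_rep_nz:
  fixes r :: "'k::field rat"
  assumes "r \<noteq> 0" obtains n d where "r = Fract n d" "n \<noteq> 0" "d \<noteq> 0"
proof -
  obtain n d where "r = Fract n d" "d \<noteq> 0" by (cases r) auto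
  moreover hence "n \<noteq> 0" using assms by (auto simp: fract_collapse)
  ultimately show ?thesis using that by blast
qed

lemma fract_deg_mult: "r \<noteq> 0 \<Longrightarrow> s \<noteq> 0 \<Longrightarrow> fract_deg (r * s) = fract_deg r + fract_deg (s::'k::field rat)"
proof -
  assume r: "r \<noteq> 0" and s: "s \<noteq> 0"
  obtain n d where 1: "r = Fract n d" "n \<noteq> 0" "d \<noteq> 0" using fract_rep_nz[OF r] by blast
  obtain n' d' where 2: "s = Fract n' d'" "n' \<noteq> 0" "d' \<noteq> 0" using fract_rep_nz[OF s] by blast
  show ?thesis using 1 2 by (simp add: fract_deg_Fract degree_mult_eq)
qed

lemma fract_deg_to_fract: "p \<noteq> 0 \<Longrightarrow> fract_deg (to_fract p) = int (degree p)"
  by (simp add: to_fract_def fract_deg_Fract)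

lemma fract_deg_inverse: "r \<noteq> 0 \<Longrightarrow> fract_deg (inverse r) = - fract_deg (r::'k::field rat)"
proof -
  assume r: "r \<noteq> 0"
  have f1: "fract_deg (1::'k rat) = 0" using fract_deg_to_fract[of "1::'k poly"] by simp
  have "inverse r \<noteq> 0" using r by simp
  hence "fract_deg (inverse r) + fract_deg r = fract_deg (inverse r * r)" using r by (rule fract_deg_mult[symmetric])
  also have "inverse r * r = 1" using r by simp
  finally show ?thesis using f1 by simp
qed

lemma fract_deg_fx: "fract_deg (fx::'k::field rat) = 1" by (simp add: fx_eq_to_fract fract_deg_to_fract)
lemma fract_deg_fconst: "c \<noteq> 0 \<Longrightarrow> fract_deg (fconst c :: 'k::field rat) = 0" by (simp add: fconst_eq_to_fract fract_deg_to_fract)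
lemma fract_deg_power: "r \<noteq> 0 \<Longrightarrow> fract_deg (r ^ n) = int n * fract_deg (r::'k::field rat)"
  by (induct n) (simp_all add: fract_deg_mult fract_deg_to_fract[of 1, simplified] algebra_simps)
lemma fract_deg_powi: "r \<noteq> 0 \<Longrightarrow> fract_deg (r powi n) = n * fract_deg (r::'k::field rat)"
  by (cases "n \<ge> 0") (auto simp: power_int_def fract_deg_power fract_deg_inverse)
lemma fract_deg_fx_powi: "fract_deg (fx powi n :: 'k::field rat) = n" by (simp add: fract_deg_powi fract_deg_fx)
(* fract_deg 0 is an unspecified junk value, hence the separate case r = 0 *)
definition deg_le :: "int \<Rightarrow> 'k::field rat \<Rightarrow> bool" where "deg_le N r \<longleftrightarrow> r = 0 \<or> fract_deg r \<le> N"
lemma deg_le_0[simp]: "deg_le N 0" by (simp add: deg_le_def)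
lemma deg_le_mono: "deg_le N r \<Longrightarrow> N \<le> M \<Longrightarrow> deg_le M r" by (auto simp: deg_le_def)
lemma deg_le_mult: "deg_le N r \<Longrightarrow> deg_le M s \<Longrightarrow> deg_le (N + M) (r * s)"
  by (cases "r = 0 \<or> s = 0") (auto simp: deg_le_def fract_deg_mult)

lemma deg_le_uminus: "deg_le N (- r) \<longleftrightarrow> deg_le N r"
proof -
  have "fract_deg (- r) = fract_deg r" if "r \<noteq> 0" for r :: "'a::field rat"
  proof -
    have "- r = fconst (-1) * r" by (simp add: fconst_uminus)
    thus ?thesis using that by (simp add: fract_deg_mult fract_deg_fconst)
  qed
  thus ?thesis by (cases "r = 0") (auto simp: deg_le_def)
qed

lemma deg_le_add: "deg_le N r \<Longrightarrow> deg_le N s \<Longrightarrow> deg_le N (r + s)"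
proof -
  assume br: "deg_le N r" and bs: "deg_le N s"
  show ?thesis
  proof (cases "r = 0 \<or> s = 0 \<or> r + s = 0")
    case True thus ?thesis using br bs by auto
  next
    case False
    obtain n d where 1: "r = Fract n d" "n \<noteq> 0" "d \<noteq> 0" using fract_rep_nz False by blast
    obtain n' d' where 2: "s = Fract n' d'" "n' \<noteq> 0" "d' \<noteq> 0" using fract_rep_nz False by blast
    have sum: "r + s = Fract (n * d' + n' * d) (d * d')" using 1 2 by simp
    hence nz: "n * d' + n' * d \<noteq> 0" using False by (auto simp: fract_collapse)
    have "degree (n * d' + n' * d) \<le> max (degree (n * d')) (degree (n' * d))" by (rule degree_add_le_max)
    hence "int (degree (n * d' + n' * d)) \<le> max (int (degree n) + int (degree d')) (int (degree n') + int (degree d))"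
      using 1 2 by (simp add: degree_mult_eq)
    hence "fract_deg (r + s) \<le> max (fract_deg r) (fract_deg s)" using sum 1 2 nz by (simp add: fract_deg_Fract degree_mult_eq)
    thus ?thesis using br bs False by (auto simp: deg_le_def)
  qed
qed

lemma deg_le_diff: "deg_le N r \<Longrightarrow> deg_le N s \<Longrightarrow> deg_le N (r - s)"
  using deg_le_add[of N r "- s"] deg_le_uminus[of N s] by simp
lemma Fract_eq_0_iff: "b \<noteq> 0 \<Longrightarrow> Fract a b = 0 \<longleftrightarrow> a = 0"
  by (simp add: Zero_fract_def eq_fract)

lemma fract_deg_add_dominant:
  fixes r s :: "'k::field rat"
  assumes "r \<noteq> 0" "deg_le (fract_deg r - 1) s"
  shows "r + s \<noteq> 0 \<and> fract_deg (r + s) = fract_deg r"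
proof (cases "s = 0")
  case True thus ?thesis using assms by simp
next
  case False
  obtain n d where 1: "r = Fract n d" "n \<noteq> 0" "d \<noteq> 0" using fract_rep_nz assms(1) by blast
  obtain n' d' where 2: "s = Fract n' d'" "n' \<noteq> 0" "d' \<noteq> 0" using fract_rep_nz False by blast
  have "fract_deg s < fract_deg r" using assms(2) False by (simp add: deg_le_def)
  hence "int (degree n') + int (degree d) < int (degree n) + int (degree d')" using 1 2 by (simp add: fract_deg_Fract)
  hence lt: "degree (n' * d) < degree (n * d')" using 1 2 by (simp add: degree_mult_eq)
  have dg: "degree (n * d' + n' * d) = degree (n * d')" using lt by (rule degree_add_eq_left)
  have nz: "n * d' + n' * d \<noteq> 0"
  proof
    assume "n * d' + n' * d = 0"
    hence "degree (n * d') = 0" using dg by simp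
    thus False using lt by simp
  qed
  have sum: "r + s = Fract (n * d' + n' * d) (d * d')" using 1 2 by simp
  show ?thesis using sum nz 1 2 dg by (simp add: fract_deg_Fract degree_mult_eq Fract_eq_0_iff)
qed

lemma deg_le_fconst[simp]: "deg_le 0 (fconst c)" by (cases "c = 0") (auto simp: deg_le_def fract_deg_fconst)
lemma deg_le_fx_powi: "n \<le> N \<Longrightarrow> deg_le N (fx powi n)" by (simp add: deg_le_def fract_deg_fx_powi)
definition poly_inv_x :: "'k::field poly \<Rightarrow> 'k rat" where "poly_inv_x u = poly (map_poly fconst u) (inverse fx)"
lemma poly_inv_x_pCons: "poly_inv_x (pCons a p) = fconst a + inverse fx * poly_inv_x p"
  by (simp add: poly_inv_x_def map_poly_pCons)
lemma poly_inv_x_0[simp]: "poly_inv_x 0 = 0" by (simp add: poly_inv_x_def)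
lemma poly_inv_x_add: "poly_inv_x (p + q) = poly_inv_x p + poly_inv_x q"
  by (induct p arbitrary: q; case_tac q) (auto simp: poly_inv_x_pCons fconst_add algebra_simps)
lemma poly_inv_x_const: "poly_inv_x [:c:] = fconst c" by (simp add: poly_inv_x_pCons)
lemma poly_inv_x_1[simp]: "poly_inv_x 1 = 1" unfolding one_pCons by (simp add: poly_inv_x_const)
lemma poly_inv_x_smult: "poly_inv_x (smult c p) = fconst c * poly_inv_x p"
  by (induct p) (auto simp: poly_inv_x_pCons fconst_mult algebra_simps)
lemma poly_inv_x_mult: "poly_inv_x (p * q) = poly_inv_x p * poly_inv_x q"
  by (induct p) (auto simp: poly_inv_x_pCons poly_inv_x_add poly_inv_x_smult algebra_simps)
lemma poly_inv_x_x: "poly_inv_x [:0,1:] = inverse fx" by (simp add: poly_inv_x_pCons)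
lemma poly_inv_x_x_power: "poly_inv_x ([:0,1:] ^ n) = inverse fx ^ n" by (induct n) (simp_all only: power_Suc power_0 poly_inv_x_mult poly_inv_x_x poly_inv_x_1)

lemma deg_le_poly_inv_x: "deg_le 0 (poly_inv_x u)"
proof (induct u)
  case 0 then show ?case by simp
next
  case (pCons a p)
  have "deg_le (-1 + 0) (inverse fx * poly_inv_x p)"
    using deg_le_mult[OF deg_le_fx_powi[of "-1" "-1"] pCons(2)] by (simp add: power_int_minus)
  hence "deg_le 0 (inverse fx * poly_inv_x p)" by (rule deg_le_mono) simp
  thus ?case by (simp add: poly_inv_x_pCons deg_le_add)
qed

lemma poly_inv_x_unit: assumes "poly u 0 \<noteq> 0" shows "poly_inv_x u \<noteq> 0 \<and> fract_deg (poly_inv_x u) = 0"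
proof -
  obtain a p where u: "u = pCons a p" by (cases u)
  have a: "a \<noteq> 0" using assms u by simp
  have "deg_le (-1 + 0) (inverse fx * poly_inv_x p)"
    using deg_le_mult[OF deg_le_fx_powi[of "-1" "-1"] deg_le_poly_inv_x] by (simp add: power_int_minus)
  hence "deg_le (fract_deg (fconst a) - 1) (inverse fx * poly_inv_x p)" using a by (simp add: fract_deg_fconst)
  from fract_deg_add_dominant[OF _ this] a show ?thesis by (simp add: u poly_inv_x_pCons fract_deg_fconst)
qed

lemma poly_map_fconst_fx: "poly (map_poly fconst p) fx = (to_fract p :: 'k::field rat)"
proof (induct p)
  case 0 then show ?case by simp
next
  case (pCons a p)
  have "pCons a p = [:a:] + [:0,1:] * p" by simp
  hence "to_fract (pCons a p) = fconst a + fx * to_fract p" by (simp only: to_fract_add to_fract_mult fconst_eq_to_fract fx_eq_to_fract)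
  thus ?case using pCons by (simp add: map_poly_pCons)
qed

lemma map_fconst_reflect: "map_poly fconst (reflect_poly p) = reflect_poly (map_poly (fconst :: 'k::field \<Rightarrow> 'k rat) p)"
proof -
  have dg: "degree (map_poly (fconst :: 'k \<Rightarrow> 'k rat) p) = degree p" by (rule degree_map_poly) simp
  show ?thesis by (rule poly_eqI) (simp add: coeff_map_poly coeff_reflect_poly dg)
qed

lemma poly_inv_x_reflect: "poly_inv_x (reflect_poly p) = to_fract p / fx ^ degree (p::'k::field poly)"
proof -
  have dg: "degree (map_poly (fconst :: 'k \<Rightarrow> 'k rat) p) = degree p" by (rule degree_map_poly) simp
  have "poly_inv_x (reflect_poly p) = inverse fx ^ degree p * poly (map_poly fconst p) (inverse (inverse fx))"
    unfolding poly_inv_x_def map_fconst_reflect by (subst poly_reflect_poly_nz) (simp_all add: dg)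
  thus ?thesis by (simp add: poly_map_fconst_fx field_simps power_inverse)
qed

lemma deg_le_0_local_at_infinity:
  fixes r :: "'k::field rat"
  assumes "deg_le 0 r"
  shows "\<exists>a b. poly b 0 \<noteq> 0 \<and> r * poly_inv_x b = poly_inv_x a"
proof (cases "r = 0")
  case True thus ?thesis by (rule_tac x=0 in exI, rule_tac x=1 in exI) simp
next
  case False
  obtain n d where 1: "r = Fract n d" "n \<noteq> 0" "d \<noteq> 0" using fract_rep_nz False by blast
  have le: "degree n \<le> degree d" using assms False 1 by (simp add: deg_le_def fract_deg_Fract)
  define a where "a = [:0,1:] ^ (degree d - degree n) * reflect_poly n"
  have "poly_inv_x a = inverse fx ^ (degree d - degree n) * (to_fract n / fx ^ degree n)"
    by (simp add: a_def poly_inv_x_mult poly_inv_x_x_power poly_inv_x_reflect)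
  also have "\<dots> = to_fract n / fx ^ degree d"
  proof -
    have "fx ^ degree d = fx ^ (degree d - degree n) * (fx ^ degree n :: 'k rat)" using le by (simp flip: power_add)
    thus ?thesis by (simp add: field_simps power_inverse)
  qed
  finally have ea: "poly_inv_x a = to_fract n / fx ^ degree d" .
  have "r * poly_inv_x (reflect_poly d) = poly_inv_x a" using 1 ea by (simp add: poly_inv_x_reflect Fract_conv_to_fract)
  moreover have "poly (reflect_poly d) 0 \<noteq> 0" using 1 by simp
  ultimately show ?thesis by blast
qed

lemma polyK_pCons: "polyK (pCons a p) z = kconst a + kmul z (polyK p (z::'k::field fn))"
proof (cases "a = 0 \<and> p = 0")
  case True thus ?thesis by (cases z) (simp add: polyK_def kconst_def zero_prod_def)
next
  case False
  hence "coeffs (pCons a p) = a # coeffs p" by (auto simp: cCons_def)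
  thus ?thesis by (simp add: polyK_def)
qed

lemma polyK_0: "polyK 0 z = 0" by (simp add: polyK_def)
lemma polyK_rat: "polyK u (q, 0) = (poly (map_poly fconst u) q, 0::'k::field rat)"
  by (induct u) (simp_all add: polyK_pCons kconst_def map_poly_pCons zero_prod_def polyK_0)
lemma polyK_tInf: "polyK u (inverse fx, 0) = (poly_inv_x u, 0::'k::field rat)"
  by (simp add: polyK_rat poly_inv_x_def)

lemma fderiv_poly_inv_x: "fderiv (poly_inv_x p) = - (inverse fx ^ 2 * poly_inv_x (pderiv p) :: 'k::field rat)"
proof (induct p)
  case 0 then show ?case by simp
next
  case (pCons a p)
  have di: "fderiv (inverse fx) = - (inverse fx ^ 2 :: 'k rat)"
    by (subst fderiv_inverse) (simp add: power2_eq_square field_simps)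
  show ?case
    by (simp add: poly_inv_x_pCons fderiv_add fderiv_mult di pCons pderiv_pCons poly_inv_x_add algebra_simps power2_eq_square)
qed

lemma deg_le_deriv: assumes "deg_le 0 r" shows "deg_le (-2) (fderiv (r::'k::field rat))"
proof -
  obtain a b where ab: "poly b 0 \<noteq> 0" "r * poly_inv_x b = poly_inv_x a" using deg_le_0_local_at_infinity[OF assms] by blast
  have eb: "poly_inv_x b \<noteq> 0" "fract_deg (poly_inv_x b) = 0" using poly_inv_x_unit[OF ab(1)] by auto
  have r: "r = poly_inv_x a * inverse (poly_inv_x b)" using ab eb by (simp add: field_simps)
  have "fderiv r = fderiv (poly_inv_x a) * inverse (poly_inv_x b) + poly_inv_x a * (- fderiv (poly_inv_x b) / (poly_inv_x b * poly_inv_x b))"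
    using r by (simp add: fderiv_mult fderiv_inverse)
  also have "\<dots> = inverse fx ^ 2 * ((poly_inv_x a * poly_inv_x (pderiv b) - poly_inv_x (pderiv a) * poly_inv_x b) * inverse (poly_inv_x b) * inverse (poly_inv_x b))"
    using eb by (simp add: fderiv_poly_inv_x field_simps)
  finally have eq: "fderiv r = inverse fx ^ 2 * ((poly_inv_x a * poly_inv_x (pderiv b) - poly_inv_x (pderiv a) * poly_inv_x b) * inverse (poly_inv_x b) * inverse (poly_inv_x b))" .
  have ib: "deg_le 0 (inverse (poly_inv_x b))" using eb by (simp add: deg_le_def fract_deg_inverse)
  have "deg_le 0 (poly_inv_x a * poly_inv_x (pderiv b) - poly_inv_x (pderiv a) * poly_inv_x b)"
    using deg_le_mult[OF deg_le_poly_inv_x deg_le_poly_inv_x, of a "pderiv b"] deg_le_mult[OF deg_le_poly_inv_x deg_le_poly_inv_x, of "pderiv a" b]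
    by (simp add: deg_le_diff)
  hence "deg_le 0 ((poly_inv_x a * poly_inv_x (pderiv b) - poly_inv_x (pderiv a) * poly_inv_x b) * inverse (poly_inv_x b) * inverse (poly_inv_x b))"
    using deg_le_mult[OF deg_le_mult[OF _ ib] ib] by simp
  moreover have "deg_le (-2) (inverse fx ^ 2 :: 'k rat)"
    using deg_le_fx_powi[of "-2" "-2"] by (simp add: power_int_minus power_inverse)
  ultimately show ?thesis using eq deg_le_mult by fastforce
qed

lemma deg_le_inv_pow: "deg_le 0 (inverse fx ^ n :: 'k::field rat)"
  using deg_le_fx_powi[of "- int n" 0] by (simp add: power_int_minus_nat)

lemma to_fract_monom: "to_fract (monom c k) = fconst c * (fx ^ k :: 'k::field rat)"
proof -
  have "monom c k = [:c:] * [:0,1:] ^ k" by (simp add: monom_altdef)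
  thus ?thesis by (simp only: to_fract_mult fconst_eq_to_fract to_fract_x_power)
qed

lemma poly_sum_expand:
  fixes P :: "'k::field poly"
  assumes "P = 0 \<or> degree P < n"
  shows "P = (\<Sum>i<n. monom (coeff P i) i)"
proof (cases "n = 0")
  case True thus ?thesis using assms by simp
next
  case False
  hence "{..<n} = {..n - 1}" by auto
  moreover have "degree P \<le> n - 1" using assms False by auto
  ultimately show ?thesis using poly_as_sum_of_monoms'[of P "n - 1"] by simp
qed

lemma to_fract_expand:
  fixes P :: "'k::field poly"
  assumes "P = 0 \<or> degree P < n"
  shows "to_fract P = (\<Sum>i<n. fconst (coeff P i) * fx ^ i)"
proof -
  have "to_fract P = to_fract (\<Sum>i<n. monom (coeff P i) i)" using poly_sum_expand[OF assms] by simp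
  thus ?thesis by (simp add: to_fract_monom)
qed

lemma deg_le_laurent:
  fixes P :: "'k::field poly"
  assumes "P = 0 \<or> int (degree P) - int m \<le> N"
  shows "deg_le N (to_fract P / fx ^ m)"
proof (cases "P = 0")
  case True thus ?thesis by simp
next
  case False
  have "fract_deg (to_fract P / fx ^ m) = int (degree P) - int m"
    using False by (simp add: divide_inverse fract_deg_mult fract_deg_inverse fract_deg_to_fract fract_deg_power fract_deg_fx)
  thus ?thesis using assms False by (simp add: deg_le_def)
qed

lemma sum_fconst_x_powers_eq_0:
  assumes "(\<Sum>i<n. fconst (c i) * fx ^ i) = (0 :: 'k::field rat)"
  shows "\<forall>i<n. c i = 0"
proof -
  have "to_fract (\<Sum>i<n. monom (c i) i) = 0" using assms by (simp only: to_fract_sum to_fract_monom)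
  hence "coeff (\<Sum>i<n. monom (c i) i) k = 0" for k by (simp only: to_fract_eq_0_iff) simp
  moreover have "coeff (\<Sum>i<n. monom (c i) i) k = c k" if "k < n" for k
    using that by (simp add: coeff_sum coeff_monom)
  ultimately show ?thesis by metis
qed

lemma deg_le_0_from_local_equations:
  fixes r \<rho> V0 V1 T :: "'k::field rat"
  assumes V0: "V0 \<noteq> 0" "fract_deg V0 = 0" and V1: "deg_le 0 V1" and T: "deg_le (-1) T"
    and E1: "deg_le 0 (r * V0 + \<rho> * V1 * T)" and E2: "deg_le 0 (r * V1 + \<rho> * V0)"
  shows "deg_le 0 r \<and> deg_le 0 \<rho>"
proof (rule ccontr)
  \<comment> \<open>the summand of larger degree dominates one of the two sums\<close>
  have dominant: False if "X \<noteq> 0" "fract_deg X > 0" "deg_le (fract_deg X - 1) Y" "deg_le 0 (X + Y)"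
    for X Y :: "'k rat"
    using fract_deg_add_dominant[OF that(1,3)] that(2,4) by (simp add: deg_le_def)
  assume "\<not> (deg_le 0 r \<and> deg_le 0 \<rho>)"
  then consider "r \<noteq> 0" "fract_deg r > 0" "deg_le (fract_deg r) \<rho>"
    | "\<rho> \<noteq> 0" "fract_deg \<rho> > 0" "deg_le (fract_deg \<rho> - 1) r"
    by (cases "r \<noteq> 0 \<and> fract_deg r > 0 \<and> deg_le (fract_deg r) \<rho>") (auto simp: deg_le_def)
  thus False
  proof cases
    case 1
    have "deg_le (fract_deg r + 0 + -1) (\<rho> * V1 * T)" using deg_le_mult[OF deg_le_mult[OF 1(3) V1] T] .
    hence "deg_le (fract_deg (r * V0) - 1) (\<rho> * V1 * T)" using V0 1 by (simp add: fract_deg_mult)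
    moreover have "r * V0 \<noteq> 0" "fract_deg (r * V0) > 0" using V0 1 by (simp_all add: fract_deg_mult)
    ultimately show False using dominant E1 by blast
  next
    case 2
    have "deg_le (fract_deg \<rho> - 1 + 0) (r * V1)" using deg_le_mult[OF 2(3) V1] .
    hence "deg_le (fract_deg (\<rho> * V0) - 1) (r * V1)" using V0 2 by (simp add: fract_deg_mult)
    moreover have "\<rho> * V0 \<noteq> 0" "fract_deg (\<rho> * V0) > 0" using V0 2 by (simp_all add: fract_deg_mult)
    ultimately show False using dominant E2 by (metis add.commute)
  qed
qed

section \<open>The curve\<close>

locale curve =
  fixes K :: "'k::alg_closed_field itself"
  assumes char_gt2: "CHAR('k) > 2"
begin

definition p :: nat where "p = CHAR('k)"
abbreviation g :: nat where "g \<equiv> genus K"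
lemma p_prime: "prime p" unfolding p_def using char_gt2 by (intro prime_CHAR_semidom) simp
lemma p_odd: "odd p"
  using p_prime char_gt2 unfolding p_def by (metis prime_odd_nat)  
lemma p_eq: "p = 2 * g + 1" using p_odd unfolding genus_def p_def by (simp add: odd_two_times_div_two_succ)
lemma g_pos: "g \<ge> 1" using char_gt2 unfolding genus_def by simp

lemma two_nz: "(2::'k) \<noteq> 0"
proof
  assume "(2::'k) = 0"
  hence "of_nat 2 = (0::'k)" by simp
  hence "CHAR('k) dvd 2" by (simp only: of_nat_eq_0_iff_char_dvd)
  thus False using char_gt2 by (simp add: nat_dvd_not_less)
qed

lemma two_fconst: "(2::'k rat) = fconst 2" using fconst_of_nat[of 2, where 'k='k] by simp
lemma fconst_m2: "fconst (-2) = (-2 :: 'k rat)" using two_fconst by (simp add: fconst_uminus)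
lemma two_nz_rat: "(2::'k rat) \<noteq> 0" using two_nz by (simp add: two_fconst)

lemma of_nat_p_rat: "(of_nat p :: 'k rat) = 0"
proof -
  have "(of_nat CHAR('k) :: 'k poly) = 0" using of_nat_CHAR[where 'a="'k poly"] by simp
  thus ?thesis by (simp add: p_def of_nat_fract flip: Zero_fract_def)
qed

definition F_poly :: "'k poly" where "F_poly = monom 1 p - [:0,1:]"
lemma fF_eq: "fF = to_fract F_poly"
  by (simp add: fF_def F_poly_def fx_eq_to_fract p_def monom_altdef to_fract_power)

lemma degree_F_poly: "degree F_poly = p"
proof -
  have "degree [:0,1::'k:] < degree (monom (1::'k) p)" using char_gt2 by (simp add: p_def degree_monom_eq)
  hence "degree (monom (1::'k) p + - [:0,1:]) = p" by (subst degree_add_eq_left) (simp_all add: degree_monom_eq)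
  thus ?thesis unfolding F_poly_def by (simp only: diff_conv_add_uminus)
qed

lemma F_poly_nz: "F_poly \<noteq> 0" using degree_F_poly char_gt2 p_def by auto
lemma fF_nz: "(fF::'k rat) \<noteq> 0" using F_poly_nz by (simp add: fF_eq)
lemma poly_F_poly: "poly F_poly a = a ^ CHAR('k) - a" by (simp add: F_poly_def poly_monom p_def)

lemma pderiv_F_poly: "pderiv F_poly = -1"
proof -
  have "(of_nat p :: 'k) = 0" by (simp add: p_def)
  thus ?thesis by (simp add: F_poly_def pderiv_monom pderiv_diff pderiv_pCons) (simp add: one_pCons)
qed

lemma fderiv_fF: "fderiv (fF::'k rat) = -1"
  by (simp add: fF_eq pderiv_F_poly)
lemma kd_kY: "kd kY = (0, -1 / (2 * fF::'k rat))"
  by (simp only: kd_kY_fderiv fderiv_fF)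

lemma x_pow_p_eq: "of_nat (2 * (g + 1)) * fF + fx = (fx ^ p::'k rat)"
proof -
  have "2*(g+1) = p + 1" using p_eq by simp
  hence "of_nat (2 * (g + 1)) = (of_nat p + 1 :: 'k rat)" by (simp only: of_nat_add of_nat_1)
  hence "of_nat (2 * (g + 1)) = (1 :: 'k rat)" using of_nat_p_rat by simp
  thus ?thesis by (simp add: fF_def p_def)
qed

lemma kinv_kY: "kinv kY = (0, inverse fF::'k rat)"
  by (simp add: kY_def kinv_def Let_def power2_eq_square divide_inverse)
lemma tInf_eq: "tInf = (inverse fx, 0::'k rat)" by (simp add: tInf_def kX_def kinv_rat)

lemma sInf_eq: "sInf = (0, fx powi (- int (g + 1))::'k rat)"
proof -
  have "sInf = (0, inverse fx ^ (g + 1)::'k rat)"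
    by (simp add: sInf_def kX_def kinv_rat kpow_rat kY_def genus_def)
  moreover have "fx powi (- int (g + 1)) = inverse (fx ^ (g+1)::'k rat)"
    by (simp only: power_int_minus power_int_of_nat)
  ultimately show ?thesis by (simp add: power_inverse)
qed

subsection \<open>Regularity at affine points\<close>

definition kconj :: "'k fn \<Rightarrow> 'k fn" where "kconj h = (fst h, - snd h)"
lemma embA_eq: "embA u = (to_fract (fst u), to_fract (snd u))" by (simp add: embA_def to_fract_def)
lemma embA_add: "embA (u + v) = embA u + embA v" by (simp add: embA_eq)
lemma embA_uminus: "embA (- u) = - embA u" by (simp add: embA_eq)
definition coord_mult :: "'k poly \<times> 'k poly \<Rightarrow> 'k poly \<times> 'k poly \<Rightarrow> 'k poly \<times> 'k poly" where
  "coord_mult u v = (fst u * fst v + snd u * snd v * F_poly, fst u * snd v + snd u * fst v)"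
lemma embA_coord_mult: "embA (coord_mult u v) = kmul (embA u) (embA v)"
  by (simp add: coord_mult_def embA_eq fF_eq)
definition on_curve :: "'k \<Rightarrow> 'k \<Rightarrow> bool" where "on_curve a b \<longleftrightarrow> b ^ 2 = a ^ CHAR('k) - a"

lemma evalA_coord_mult: "on_curve a b \<Longrightarrow> evalA (coord_mult u v) a b = evalA u a b * evalA v a b"
proof -
  assume "on_curve a b"
  hence F: "poly F_poly a = b * b" by (simp add: on_curve_def poly_F_poly power2_eq_square)
  show ?thesis by (simp add: coord_mult_def evalA_def F algebra_simps)
qed

lemma on_curve_neg: "on_curve a b \<Longrightarrow> on_curve a (-b)" by (simp add: on_curve_def)

lemma reg_aff_add: assumes "on_curve a b" "reg_at (Aff a b) h" "reg_at (Aff a b) h'"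
  shows "reg_at (Aff a b) (h + h')"
proof -
  obtain u v where 1: "evalA v a b \<noteq> 0" "kmul h (embA v) = embA u" using assms(2) by auto
  obtain u' v' where 2: "evalA v' a b \<noteq> 0" "kmul h' (embA v') = embA u'" using assms(3) by auto
  have "evalA (coord_mult v v') a b \<noteq> 0" using 1 2 assms(1) by (simp add: evalA_coord_mult)
  moreover have "kmul (h + h') (embA (coord_mult v v')) = embA (coord_mult u v' + coord_mult u' v)"
  proof -
    have "kmul (h + h') (embA (coord_mult v v')) = kmul (kmul h (embA v)) (embA v') + kmul (kmul h' (embA v')) (embA v)"
      by (simp add: embA_coord_mult kmul_add_left kmul_assoc) (metis kmul_comm)
    thus ?thesis using 1 2 by (simp add: embA_add embA_coord_mult)
  qed
  ultimately show ?thesis by (simp only: reg_at.simps) blast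
qed

lemma reg_aff_mult: assumes "on_curve a b" "reg_at (Aff a b) h" "reg_at (Aff a b) h'"
  shows "reg_at (Aff a b) (kmul h h')"
proof -
  obtain u v where 1: "evalA v a b \<noteq> 0" "kmul h (embA v) = embA u" using assms(2) by auto
  obtain u' v' where 2: "evalA v' a b \<noteq> 0" "kmul h' (embA v') = embA u'" using assms(3) by auto
  have "evalA (coord_mult v v') a b \<noteq> 0" using 1 2 assms(1) by (simp add: evalA_coord_mult)
  moreover have "kmul (kmul h h') (embA (coord_mult v v')) = embA (coord_mult u u')"
  proof -
    have "kmul (kmul h h') (embA (coord_mult v v')) = kmul (kmul h (embA v)) (kmul h' (embA v'))"
      by (simp add: embA_coord_mult kmul_assoc) (metis kmul_comm kmul_assoc)
    thus ?thesis using 1 2 by (simp add: embA_coord_mult)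
  qed
  ultimately show ?thesis by (simp only: reg_at.simps) blast
qed

lemma reg_aff_uminus: assumes "reg_at (Aff a b) h" shows "reg_at (Aff a b) (- h)"
proof -
  obtain u v where 1: "evalA v a b \<noteq> 0" "kmul h (embA v) = embA u" using assms by auto
  have "kmul (- h) (embA v) = embA (- u)" using 1 by (simp add: kmul_uminus_left embA_uminus)
  thus ?thesis using 1 by (simp only: reg_at.simps) blast
qed

lemma reg_aff_diff: "on_curve a b \<Longrightarrow> reg_at (Aff a b) h \<Longrightarrow> reg_at (Aff a b) h' \<Longrightarrow> reg_at (Aff a b) (h - h')"
  using reg_aff_add[of a b h "- h'"] reg_aff_uminus[of a b h'] by simp

lemma reg_aff_conj: assumes "reg_at (Aff a b) h" shows "reg_at (Aff a (-b)) (kconj h)"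
proof -
  obtain u v where 1: "evalA v a b \<noteq> 0" "kmul h (embA v) = embA u" using assms by auto
  have "evalA (fst v, - snd v) a (-b) \<noteq> 0" using 1 by (simp add: evalA_def)
  moreover have "kmul (kconj h) (embA (fst v, - snd v)) = embA (fst u, - snd u)"
  proof -
    have "kmul (kconj h) (embA (fst v, - snd v)) = kconj (kmul h (embA v))"
      by (cases h) (simp add: embA_eq kconj_def)
    thus ?thesis using 1 by (simp add: embA_eq kconj_def)
  qed
  ultimately show ?thesis by (simp only: reg_at.simps) blast
qed

lemma reg_aff_no_pole: assumes "no_pole a r1" "no_pole a r2" shows "reg_at (Aff a b) (r1, r2)"
proof -
  obtain n1 d1 where 1: "r1 = Fract n1 d1" "poly d1 a \<noteq> 0" using assms(1) unfolding no_pole_def by blast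
  obtain n2 d2 where 2: "r2 = Fract n2 d2" "poly d2 a \<noteq> 0" using assms(2) unfolding no_pole_def by blast
  have nz: "d1 \<noteq> 0" "d2 \<noteq> 0" using 1 2 by auto
  have "evalA (d1 * d2, 0) a b \<noteq> 0" using 1 2 by (simp add: evalA_def)
  moreover have "kmul (r1, r2) (embA (d1 * d2, 0)) = embA (n1 * d2, n2 * d1)"
    using 1 2 nz by (simp add: embA_eq Fract_conv_to_fract)
  ultimately show ?thesis by (simp only: reg_at.simps) blast
qed

lemma reg_aff_rat_no_pole: assumes "reg_at (Aff a b) (q, 0)" shows "no_pole a q"
proof -
  obtain u v where 1: "evalA v a b \<noteq> 0" "kmul (q, 0) (embA v) = embA u" using assms by auto
  hence e0: "q * to_fract (fst v) = to_fract (fst u)" and e1: "q * to_fract (snd v) = to_fract (snd u)"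
    by (simp_all add: embA_eq)
  show ?thesis
  proof (cases "poly (fst v) a = 0")
    case False
    hence "fst v \<noteq> 0" by auto
    hence "q = Fract (fst u) (fst v)" using e0 by (simp add: Fract_conv_to_fract eq_divide_eq)
    thus ?thesis using False unfolding no_pole_def by blast
  next
    case True
    hence "poly (snd v) a \<noteq> 0" using 1 by (auto simp: evalA_def)
    moreover hence "snd v \<noteq> 0" by auto
    hence "q = Fract (snd u) (snd v)" using e1 by (simp add: Fract_conv_to_fract eq_divide_eq)
    ultimately show ?thesis unfolding no_pole_def by blast
  qed
qed

lemma order_F_poly_le: "order a F_poly \<le> 1"
proof (rule ccontr)
  assume "\<not> order a F_poly \<le> 1"
  hence "[:-a,1:] ^ 2 dvd F_poly" using F_poly_nz by (simp add: order_divides)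
  then obtain q where q: "F_poly = [:-a,1:] ^ 2 * q" by (auto elim: dvdE)
  hence Fq: "F_poly = [:-a,1:] * ([:-a,1:] * q)" by (simp only: power2_eq_square mult.assoc)
  have "poly (pderiv ([:-a,1:] * ([:-a,1:] * q))) a = 0"
    by (simp only: pderiv_mult poly_add poly_mult) simp
  hence "poly (pderiv F_poly) a = 0" using Fq by simp
  thus False by (simp add: pderiv_F_poly)
qed

lemma no_pole_square_times_F: fixes r :: "'k rat" assumes "no_pole a (r * r * fF)" shows "no_pole a r"
proof (cases "r = 0")
  case True thus ?thesis by simp
next
  case False
  obtain n d where nd: "r = Fract n d" "d \<noteq> 0" "poly n a \<noteq> 0 \<or> poly d a \<noteq> 0"
    using Fract_coprime_at[OF False] by blast
  show ?thesis
  proof (rule ccontr)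
    assume nr: "\<not> no_pole a r"
    have da: "poly d a = 0" using nr nd unfolding no_pole_def by blast
    have na: "poly n a \<noteq> 0" using nd da by blast
    obtain N D where ND: "r * r * fF = Fract N D" "poly D a \<noteq> 0" using assms unfolding no_pole_def by blast
    have Dnz: "D \<noteq> 0" using ND by auto
    have dnz: "d \<noteq> 0" by (rule nd(2))
    have "r * r * fF = Fract (n * n * F_poly) (d * d)" using nd by (simp add: fF_eq to_fract_def)
    hence eq: "n * n * F_poly * D = N * (d * d)" using ND dnz Dnz by (simp add: eq_fract)
    have nnz: "n \<noteq> 0" using na by auto
    have lhsnz: "n * n * F_poly * D \<noteq> 0" using nnz F_poly_nz Dnz by simp
    hence Nnz: "N \<noteq> 0" using eq by auto
    have "order a (n * n * F_poly * D) = order a n + order a n + order a F_poly + order a D"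
      using nnz F_poly_nz Dnz by (simp add: order_mult)
    also have "\<dots> = order a F_poly" using na ND(2) by (simp add: order_0I)
    finally have o1: "order a (n * n * F_poly * D) \<le> 1" using order_F_poly_le by simp
    have "order a (N * (d * d)) = order a N + order a d + order a d"
      using Nnz dnz by (simp add: order_mult)
    moreover have "order a d \<ge> 1" using da dnz by (simp add: order_root Suc_le_eq)
    ultimately have "order a (N * (d * d)) \<ge> 2" by simp
    thus False using o1 eq by simp
  qed
qed

lemma no_pole_cancel_fconst:
  assumes "c \<noteq> 0" and "no_pole a (fconst c * r)"
  shows "no_pole a r"
proof -
  have "r = fconst (inverse c) * (fconst c * r)" using assms(1) by (simp flip: mult.assoc fconst_mult)
  thus ?thesis using no_pole_mult[OF no_pole_fconst assms(2)] by metis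
qed

lemma reg_aff_both_no_pole:
  assumes "on_curve a b" "reg_at (Aff a b) h" "reg_at (Aff a (-b)) h"
  shows "no_pole a (fst h) \<and> no_pole a (snd h)"
proof -
  obtain r1 r2 where h: "h = (r1, r2)" by (cases h)
  have c: "reg_at (Aff a b) (kconj h)" using reg_aff_conj[OF assms(3)] by simp
  have "reg_at (Aff a b) (h + kconj h)" using reg_aff_add[OF assms(1) assms(2) c] .
  hence "reg_at (Aff a b) (fconst 2 * r1, 0)" using h by (simp add: kconj_def flip: two_fconst)
  hence "no_pole a r1" using no_pole_cancel_fconst[OF two_nz] reg_aff_rat_no_pole by blast
  moreover have "reg_at (Aff a b) (h - kconj h)" using reg_aff_diff[OF assms(1) assms(2) c] .
  hence "reg_at (Aff a b) (kmul (h - kconj h) (h - kconj h))" using reg_aff_mult assms(1) by blast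
  moreover have "fconst 4 = (4 :: 'k rat)" using fconst_of_nat[of 4] by simp
  ultimately have "reg_at (Aff a b) (fconst 4 * (r2 * r2 * fF), 0)" using h by (simp add: kconj_def algebra_simps)
  moreover have "(4::'k) \<noteq> 0" using two_nz by (metis mult_eq_0_iff numeral_Bit0_eq_double mult_2_right)
  ultimately have "no_pole a (r2 * r2 * fF)" using no_pole_cancel_fconst reg_aff_rat_no_pole by blast
  hence "no_pole a r2" by (rule no_pole_square_times_F)
  with \<open>no_pole a r1\<close> show ?thesis using h by simp
qed

lemma on_curve_exists: "\<exists>b. on_curve a b"
  unfolding on_curve_def using nth_root_exists[of 2 "a ^ CHAR('k) - a"] by auto
lemma Aff_in_Xpts: "Aff a b \<in> Xpts \<longleftrightarrow> on_curve a b" by (simp add: Xpts_def on_curve_def)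

lemma reg_off_0_laurent:
  assumes "\<forall>a b. on_curve a b \<and> a \<noteq> 0 \<longrightarrow> reg_at (Aff a b) h"
  shows "\<exists>A B m. h = (to_fract A / fx ^ m, to_fract B / fx ^ m)"
proof -
  have np: "no_pole a (fst h) \<and> no_pole a (snd h)" if "a \<noteq> 0" for a
  proof -
    obtain b where b: "on_curve a b" using on_curve_exists by blast
    show ?thesis using reg_aff_both_no_pole[OF b] assms b on_curve_neg[OF b] that by blast
  qed
  obtain A m1 where 1: "fst h = to_fract A / fx ^ m1" using no_pole_off_0_laurent np by blast
  obtain B m2 where 2: "snd h = to_fract B / fx ^ m2" using no_pole_off_0_laurent np by blast
  have "fst h = to_fract (A * [:0,1:] ^ m2) / fx ^ (m1 + m2)"
    using 1 by (simp add: to_fract_x_power power_add)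
  moreover have "snd h = to_fract (B * [:0,1:] ^ m1) / fx ^ (m1 + m2)"
    using 2 by (simp add: to_fract_x_power power_add)
  ultimately show ?thesis by (metis prod.collapse)
qed

lemma reg_affine_poly:
  assumes "\<forall>a b. on_curve a b \<longrightarrow> reg_at (Aff a b) h"
  shows "\<exists>A B. h = (to_fract A, to_fract B)"
proof -
  have np: "no_pole a (fst h) \<and> no_pole a (snd h)" for a
  proof -
    obtain b where b: "on_curve a b" using on_curve_exists by blast
    show ?thesis using reg_aff_both_no_pole[OF b] assms b on_curve_neg[OF b] by blast
  qed
  obtain A where 1: "fst h = to_fract A" using no_pole_everywhere_poly np by blast
  obtain B where 2: "snd h = to_fract B" using no_pole_everywhere_poly np by blast
  show ?thesis using 1 2 by (metis prod.collapse)
qed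

lemma no_pole_laurent: "a \<noteq> 0 \<Longrightarrow> no_pole a (to_fract A / fx ^ m)"
proof -
  assume a: "a \<noteq> 0"
  have "to_fract A / fx ^ m = to_fract A * inverse fx ^ m" by (simp add: divide_inverse power_inverse)
  thus ?thesis using a by (simp add: no_pole_mult no_pole_power no_pole_inverse_fx)
qed

subsection \<open>Regularity at infinity\<close>

definition s_coeff :: "'k rat" where "s_coeff = fx powi (- int (g + 1))"
lemma s_coeff_inv: "s_coeff = inverse (fx ^ (g + 1))" unfolding s_coeff_def by (simp only: power_int_minus power_int_of_nat)
lemma s_coeff_nz: "s_coeff \<noteq> 0" by (simp add: s_coeff_inv)
lemma s_coeff_mult: "s_coeff * fx ^ (g + 1) = 1" unfolding s_coeff_inv by (rule left_inverse) simp
lemma fract_deg_s_coeff: "fract_deg s_coeff = - int (g + 1)" by (simp add: s_coeff_def fract_deg_fx_powi)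
lemma sInf_s_coeff: "sInf = (0, s_coeff)" by (simp add: sInf_eq s_coeff_def)
lemma embB_eq: "embB u = (poly_inv_x (fst u), poly_inv_x (snd u) * s_coeff)"
  by (simp add: embB_def tInf_eq polyK_tInf sInf_s_coeff)
lemma fract_deg_fF: "fract_deg (fF::'k rat) = int p"
  using F_poly_nz by (simp add: fF_eq fract_deg_to_fract degree_F_poly)

lemma deg_le_s_coeff_square_F: "deg_le (-1) (s_coeff * s_coeff * fF)"
proof -
  have "fract_deg (s_coeff * s_coeff * fF) = -1" using s_coeff_nz fF_nz by (simp add: fract_deg_mult fract_deg_s_coeff fract_deg_fF p_eq)
  thus ?thesis by (simp add: deg_le_def)
qed

lemma split_s_coeff: "r = (r * fx ^ (g + 1)) * s_coeff"
  by (metis s_coeff_mult mult.assoc mult.commute mult_1_right)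

lemma reg_Inf_imp_deg_le:
  fixes r1 r2 :: "'k rat"
  assumes "reg_at Inf (r1, r2)"
  shows "deg_le 0 r1 \<and> deg_le 0 (r2 * fx ^ (g + 1))"
proof -
  obtain u v where v0: "poly (fst v) 0 \<noteq> 0" and uv: "kmul (r1, r2) (embB v) = embB u"
    using assms by auto
  define \<rho> where "\<rho> = r2 * fx ^ (g + 1)"
  have r2: "r2 = \<rho> * s_coeff" unfolding \<rho>_def by (rule split_s_coeff)
  define V0 V1 where "V0 = poly_inv_x (fst v)" and "V1 = poly_inv_x (snd v)"
  have E: "r1 * V0 + r2 * (V1 * s_coeff) * fF = poly_inv_x (fst u)"
    "r1 * (V1 * s_coeff) + r2 * V0 = poly_inv_x (snd u) * s_coeff"
    using uv by (simp_all add: embB_eq V0_def V1_def)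
  have "r1 * V0 + \<rho> * V1 * (s_coeff * s_coeff * fF) = poly_inv_x (fst u)"
    using E(1) r2 by (simp add: algebra_simps)
  hence E1: "deg_le 0 (r1 * V0 + \<rho> * V1 * (s_coeff * s_coeff * fF))" by (simp add: deg_le_poly_inv_x)
  have "(r1 * V1 + \<rho> * V0) * s_coeff = poly_inv_x (snd u) * s_coeff"
    using E(2) r2 by (simp add: algebra_simps)
  hence E2: "deg_le 0 (r1 * V1 + \<rho> * V0)" using s_coeff_nz by (simp add: deg_le_poly_inv_x)
  have "V0 \<noteq> 0" "fract_deg V0 = 0" using poly_inv_x_unit[OF v0] by (simp_all add: V0_def)
  from deg_le_0_from_local_equations[OF this _ deg_le_s_coeff_square_F E1 E2]
  show ?thesis by (simp add: V1_def deg_le_poly_inv_x \<rho>_def)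
qed

lemma deg_le_imp_reg_Inf:
  fixes r1 r2 :: "'k rat"
  assumes "deg_le 0 r1" and "deg_le 0 (r2 * fx ^ (g + 1))"
  shows "reg_at Inf (r1, r2)"
proof -
  obtain a1 b1 a2 b2 where 1: "poly b1 0 \<noteq> 0" "r1 * poly_inv_x b1 = poly_inv_x a1"
    and 2: "poly b2 0 \<noteq> 0" "(r2 * fx ^ (g + 1)) * poly_inv_x b2 = poly_inv_x a2"
    using assms deg_le_0_local_at_infinity by metis
  have "r2 * (poly_inv_x b1 * poly_inv_x b2) = poly_inv_x a2 * poly_inv_x b1 * s_coeff"
    by (subst split_s_coeff[of r2]) (simp add: 2(2)[symmetric] algebra_simps)
  hence "kmul (r1, r2) (embB (b1 * b2, 0)) = embB (a1 * b2, a2 * b1)"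
    using 1 by (simp add: embB_eq poly_inv_x_mult algebra_simps)
  moreover have "poly (fst (b1 * b2, 0::'k poly)) 0 \<noteq> 0" using 1 2 by simp
  ultimately show ?thesis by (simp only: reg_at.simps) blast
qed

lemma reg_Inf_iff: "reg_at Inf (r1, r2) \<longleftrightarrow> deg_le 0 r1 \<and> deg_le 0 (r2 * fx ^ (g + 1 :: nat) :: 'k rat)"
  using reg_Inf_imp_deg_le deg_le_imp_reg_Inf by blast

declare reg_at.simps[simp del] dreg_at.simps[simp del]

lemma reg_Inf_add: "reg_at Inf (h::'k fn) \<Longrightarrow> reg_at Inf h' \<Longrightarrow> reg_at Inf (h + h')"
  by (cases h; cases h') (simp add: reg_Inf_iff deg_le_add distrib_right)

lemma reg_Inf_mult: assumes "reg_at Inf (h::'k fn)" "reg_at Inf h'" shows "reg_at Inf (kmul h h')"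
proof -
  obtain r1 r2 q1 q2 where h: "h = (r1, r2)" "h' = (q1, q2)" by (cases h; cases h')
  define \<rho> \<sigma> where "\<rho> = r2 * fx ^ (g + 1)" and "\<sigma> = q2 * fx ^ (g + 1)"
  have b: "deg_le 0 r1" "deg_le 0 \<rho>" "deg_le 0 q1" "deg_le 0 \<sigma>" using assms h by (simp_all add: reg_Inf_iff \<rho>_def \<sigma>_def)
  have r2: "r2 = \<rho> * s_coeff" and q2: "q2 = \<sigma> * s_coeff" using split_s_coeff \<rho>_def \<sigma>_def by blast+
  have e1: "r1 * q1 + r2 * q2 * fF = r1 * q1 + \<rho> * \<sigma> * (s_coeff * s_coeff * fF)" using r2 q2 by (simp add: algebra_simps)
  have b1: "deg_le 0 (r1 * q1 + \<rho> * \<sigma> * (s_coeff * s_coeff * fF))"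
    using deg_le_add[OF deg_le_mult[OF b(1,3)] deg_le_mono[OF deg_le_mult[OF deg_le_mult[OF b(2,4)] deg_le_s_coeff_square_F]]] by simp
  have e2: "(r1 * q2 + r2 * q1) * fx ^ (g + 1) = r1 * \<sigma> + \<rho> * q1"
    by (simp add: \<rho>_def \<sigma>_def algebra_simps)
  have b2: "deg_le 0 (r1 * \<sigma> + \<rho> * q1)"
    using deg_le_add[OF deg_le_mult[OF b(1,4)] deg_le_mult[OF b(2,3)]] by simp
  have "deg_le 0 (r1 * q1 + r2 * q2 * fF)" unfolding e1 by (rule b1)
  moreover have "deg_le 0 ((r1 * q2 + r2 * q1) * fx ^ (g + 1))" unfolding e2 by (rule b2)
  ultimately show ?thesis using h by (simp add: reg_Inf_iff)
qed

lemma reg_Inf_const: "reg_at Inf (fconst (c::'k), 0)" by (simp add: reg_Inf_iff)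
lemma reg_aff_const: "reg_at (Aff a b) (fconst (c::'k), 0)" by (rule reg_aff_no_pole) simp_all
lemma reg_Inf_0: "reg_at Inf (0::'k fn)" using reg_Inf_const[of 0] by (simp add: zero_prod_def)
lemma reg_aff_0: "reg_at (Aff (a::'k) b) 0" using reg_aff_const[of a b 0] by (simp add: zero_prod_def)

subsection \<open>Regular differentials\<close>

lemma dreg_Inf_add: "dreg_at Inf (w::'k fn) \<Longrightarrow> dreg_at Inf w' \<Longrightarrow> dreg_at Inf (w + w')"
proof -
  assume "dreg_at Inf w" "dreg_at Inf w'"
  then obtain a b a' b' where 1: "reg_at Inf a" "reg_at Inf b" "w = kmul a (kd tInf) + kmul b (kd sInf)"
    and 2: "reg_at Inf a'" "reg_at Inf b'" "w' = kmul a' (kd tInf) + kmul b' (kd sInf)"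
    by (simp only: dreg_at.simps) blast
  have "w + w' = kmul (a + a') (kd tInf) + kmul (b + b') (kd sInf)" using 1 2 by (simp add: kmul_add_left)
  thus ?thesis using 1 2 reg_Inf_add by (simp only: dreg_at.simps) blast
qed

lemma dreg_Inf_mult: "reg_at Inf (h::'k fn) \<Longrightarrow> dreg_at Inf (w::'k fn) \<Longrightarrow> dreg_at Inf (kmul h w)"
proof -
  assume h: "reg_at Inf h" and "dreg_at Inf w"
  then obtain a b where 1: "reg_at Inf a" "reg_at Inf b" "w = kmul a (kd tInf) + kmul b (kd sInf)"
    by (simp only: dreg_at.simps) blast
  have "kmul h w = kmul (kmul h a) (kd tInf) + kmul (kmul h b) (kd sInf)" using 1 by (simp add: kmul_add_right kmul_assoc)
  thus ?thesis using 1 h reg_Inf_mult by (simp only: dreg_at.simps) blast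
qed

lemma dreg_aff_add: "on_curve a b \<Longrightarrow> dreg_at (Aff a b) w \<Longrightarrow> dreg_at (Aff a b) w' \<Longrightarrow> dreg_at (Aff a b) (w + w')"
proof -
  assume o: "on_curve a b" and "dreg_at (Aff a b) w" "dreg_at (Aff a b) w'"
  then obtain p q p' q' where 1: "reg_at (Aff a b) p" "reg_at (Aff a b) q" "w = kmul p (kd kX) + kmul q (kd kY)"
    and 2: "reg_at (Aff a b) p'" "reg_at (Aff a b) q'" "w' = kmul p' (kd kX) + kmul q' (kd kY)"
    by (simp only: dreg_at.simps) blast
  have "w + w' = kmul (p + p') (kd kX) + kmul (q + q') (kd kY)" using 1 2 by (simp add: kmul_add_left)
  thus ?thesis using 1 2 o reg_aff_add by (simp only: dreg_at.simps) blast
qed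

lemma dreg_aff_mult: "on_curve a b \<Longrightarrow> reg_at (Aff a b) h \<Longrightarrow> dreg_at (Aff a b) w \<Longrightarrow> dreg_at (Aff a b) (kmul h w)"
proof -
  assume o: "on_curve a b" and h: "reg_at (Aff a b) h" and "dreg_at (Aff a b) w"
  then obtain p q where 1: "reg_at (Aff a b) p" "reg_at (Aff a b) q" "w = kmul p (kd kX) + kmul q (kd kY)"
    by (simp only: dreg_at.simps) blast
  have "kmul h w = kmul (kmul h p) (kd kX) + kmul (kmul h q) (kd kY)" using 1 by (simp add: kmul_add_right kmul_assoc)
  thus ?thesis using 1 h o reg_aff_mult by (simp only: dreg_at.simps) blast
qed

lemma uminus_eq_kmul_minus_one: "- w = kmul (fconst (-1), 0) (w::'k fn)"
  by (cases w) (simp add: fconst_uminus)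

lemma dreg_Inf_diff: "dreg_at Inf (w::'k fn) \<Longrightarrow> dreg_at Inf w' \<Longrightarrow> dreg_at Inf (w - w')"
proof -
  assume 1: "dreg_at Inf w" and 2: "dreg_at Inf w'"
  have "dreg_at Inf (kmul (fconst (-1), 0) w')" by (rule dreg_Inf_mult[OF reg_Inf_const 2])
  hence "dreg_at Inf (- w')" by (simp only: uminus_eq_kmul_minus_one[symmetric])
  hence "dreg_at Inf (w + - w')" by (rule dreg_Inf_add[OF 1])
  thus ?thesis by simp
qed

lemma dreg_aff_diff: "on_curve a b \<Longrightarrow> dreg_at (Aff a b) w \<Longrightarrow> dreg_at (Aff a b) w' \<Longrightarrow> dreg_at (Aff a b) (w - w')"
proof -
  assume o: "on_curve a b" and 1: "dreg_at (Aff a b) w" and 2: "dreg_at (Aff a b) w'"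
  have "dreg_at (Aff a b) (kmul (fconst (-1), 0) w')" by (rule dreg_aff_mult[OF o reg_aff_const 2])
  hence "dreg_at (Aff a b) (- w')" by (simp only: uminus_eq_kmul_minus_one[symmetric])
  hence "dreg_at (Aff a b) (w + - w')" by (rule dreg_aff_add[OF o 1])
  thus ?thesis by simp
qed

lemma dreg_Inf_ksmul: "dreg_at Inf (w::'k fn) \<Longrightarrow> dreg_at Inf (ksmul c w)"
  unfolding ksmul_kmul by (rule dreg_Inf_mult[OF reg_Inf_const])
lemma dreg_aff_ksmul: "on_curve a b \<Longrightarrow> dreg_at (Aff a b) w \<Longrightarrow> dreg_at (Aff a b) (ksmul c w)"
  unfolding ksmul_kmul by (rule dreg_aff_mult[OF _ reg_aff_const])
lemma dreg_Inf_0: "dreg_at Inf (0::'k fn)"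
  by (simp only: dreg_at.simps) (rule exI[of _ 0], rule exI[of _ 0], simp add: reg_Inf_0)
lemma dreg_aff_0: "dreg_at (Aff (a::'k) b) 0"
  by (simp only: dreg_at.simps) (rule exI[of _ 0], rule exI[of _ 0], simp add: reg_aff_0)
lemma dreg_Inf_sum: "(\<And>i. i \<in> A \<Longrightarrow> dreg_at Inf (f i)) \<Longrightarrow> dreg_at Inf (sum f A::'k fn)"
  by (induct A rule: infinite_finite_induct) (auto intro: dreg_Inf_add dreg_Inf_0)
lemma dreg_aff_sum: "on_curve a b \<Longrightarrow> (\<And>i. i \<in> A \<Longrightarrow> dreg_at (Aff a b) (f i)) \<Longrightarrow> dreg_at (Aff a b) (sum f A)"
  by (induct A rule: infinite_finite_induct) (auto intro: dreg_aff_add dreg_aff_0)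

lemma kd_tInf: "kd tInf = (- (inverse fx ^ 2), 0::'k rat)"
proof -
  have "fderiv (inverse fx) = - (inverse fx ^ 2 :: 'k rat)"
    by (subst fderiv_inverse) (simp add: power2_eq_square field_simps)
  thus ?thesis by (simp add: tInf_eq kd_pair)
qed

definition ds_coeff :: "'k rat" where "ds_coeff = - (fx ^ (g - 1) / (2 * fF))"

lemma kd_sInf: "kd sInf = (0, ds_coeff)"
proof -
  have g1: "g \<ge> 1" by (rule g_pos)
  have dS: "fderiv s_coeff = - (of_nat (g + 1) * inverse (fx ^ (g + 2)))"
  proof -
    have "fderiv s_coeff = of_int (- int (g + 1)) * fx powi (- int (g + 1) - 1)"
      unfolding s_coeff_def by (simp add: fderiv_power_int)
    moreover have "fx powi (- int (g + 1) - 1) = inverse (fx ^ (g + 2) :: 'k rat)"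
    proof -
      have "- int (g + 1) - 1 = - int (g + 2)" by simp
      thus ?thesis by (simp only: power_int_minus power_int_of_nat)
    qed
    ultimately show ?thesis by (simp add: algebra_simps)
  qed
  have key: "of_nat (2 * (g + 1)) * fF + fx = (fx ^ (2 * g + 1) :: 'k rat)" using x_pow_p_eq p_eq by simp
  have "fderiv s_coeff + s_coeff * fderiv fF / (2 * fF) = ds_coeff"
  proof -
    have "2 * g + 1 = (g - 1) + (g + 2)" using g1 by simp
    hence e2: "fx ^ (2 * g + 1) = fx ^ (g - 1) * (fx ^ (g + 2) :: 'k rat)" by (metis power_add)
    have nz: "fx ^ (g - 1) \<noteq> (0::'k rat)" "fx ^ (g + 2) \<noteq> (0::'k rat)" "fx ^ (g + 1) \<noteq> (0::'k rat)" by simp_all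
    have "fderiv s_coeff + s_coeff * fderiv fF / (2 * fF) = - (of_nat (g + 1) * inverse (fx ^ (g + 2))) - inverse (fx ^ (g + 1)) / (2 * fF)"
      by (simp only: dS fderiv_fF) (simp add: s_coeff_inv)
    also have "\<dots> = - ((of_nat (2 * (g + 1)) * fF + fx) / (2 * fF * fx ^ (g + 2)))"
      using fF_nz two_nz_rat nz by (simp add: field_simps)
    also have "\<dots> = - (fx ^ (2 * g + 1) / (2 * fF * fx ^ (g + 2)))" by (simp only: key)
    also have "\<dots> = ds_coeff" unfolding ds_coeff_def using fF_nz two_nz_rat nz e2 by (simp add: field_simps)
    finally show ?thesis .
  qed
  thus ?thesis by (simp add: sInf_s_coeff kd_pair)
qed

lemma ds_coeff_s_coeff: "2 * s_coeff * ds_coeff * fF = - (inverse fx ^ 2 :: 'k rat)"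
proof -
  have g1: "g \<ge> 1" by (rule g_pos)
  have "fx ^ (g + 1) = fx ^ (g - 1) * (fx ^ 2 :: 'k rat)" using g1 by (simp flip: power_add)
  thus ?thesis using fF_nz two_nz_rat by (simp add: s_coeff_inv ds_coeff_def field_simps)
qed

lemma kd_tInf_via_sInf: "kd tInf = kmul (0, 2 * s_coeff) (kd sInf)"
  by (simp add: kd_tInf kd_sInf ds_coeff_s_coeff[symmetric] algebra_simps)

lemma reg_Inf_s_multiple: "reg_at Inf (0, fconst c * s_coeff::'k rat)"
proof -
  have e: "fconst c * s_coeff * fx ^ (g + 1) = fconst c" using s_coeff_mult by (metis mult.assoc mult_1_right)
  have "deg_le 0 (fconst c * s_coeff * fx ^ (g + 1))" unfolding e by simp
  thus ?thesis by (simp add: reg_Inf_iff)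
qed

lemma dreg_Inf_obtain: "dreg_at Inf (w::'k fn) \<Longrightarrow> \<exists>\<gamma>. reg_at Inf \<gamma> \<and> w = kmul \<gamma> (kd sInf)"
proof -
  assume "dreg_at Inf w"
  then obtain \<alpha> \<beta> where ab: "reg_at Inf \<alpha>" "reg_at Inf \<beta>" "w = kmul \<alpha> (kd tInf) + kmul \<beta> (kd sInf)" by (auto simp: dreg_at.simps)
  have "w = kmul (kmul \<alpha> (0, 2 * s_coeff) + \<beta>) (kd sInf)"
    using ab(3) by (simp add: kd_tInf_via_sInf kmul_add_left kmul_assoc)
  moreover have "reg_at Inf (kmul \<alpha> (0, 2 * s_coeff) + \<beta>)"
    using ab reg_Inf_add reg_Inf_mult reg_Inf_s_multiple[of 2] two_fconst by metis
  ultimately show ?thesis by blast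
qed

lemma dreg_Inf_kd: assumes "reg_at Inf (f::'k fn)" shows "dreg_at Inf (kd f)"
proof -
  obtain r1 r2 where f: "f = (r1, r2)" by (cases f)
  define \<rho> where "\<rho> = r2 * fx ^ (g + 1)"
  have b: "deg_le 0 r1" "deg_le 0 \<rho>" using assms f by (simp_all add: reg_Inf_iff \<rho>_def)
  have r2: "r2 = \<rho> * s_coeff" using split_s_coeff \<rho>_def by blast
  define \<alpha> where "\<alpha> = (- (fx ^ 2 * fderiv r1), - (fx ^ 2 * fderiv \<rho>) * s_coeff)"
  define \<beta> where "\<beta> = (\<rho>, 0::'k rat)"
  have bx: "deg_le 2 (fx ^ 2 :: 'k rat)" using deg_le_fx_powi[of 2 2] by simp
  have "reg_at Inf \<alpha>"
  proof -
    have "deg_le (2 + -2) (fx ^ 2 * fderiv r1)" using deg_le_mult[OF bx deg_le_deriv[OF b(1)]] .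
    moreover have "deg_le (2 + -2) (fx ^ 2 * fderiv \<rho>)" using deg_le_mult[OF bx deg_le_deriv[OF b(2)]] .
    moreover have e: "- (fx ^ 2 * fderiv \<rho>) * s_coeff * fx ^ (g + 1) = - (fx ^ 2 * fderiv \<rho>)"
      using s_coeff_mult by (metis mult.assoc mult_1_right)
    ultimately have "deg_le 0 (- (fx ^ 2 * fderiv r1))" "deg_le 0 (- (fx ^ 2 * fderiv \<rho>) * s_coeff * fx ^ (g + 1))"
      unfolding e by (simp_all add: deg_le_uminus)
    thus ?thesis unfolding \<alpha>_def reg_Inf_iff by blast
  qed
  moreover have "reg_at Inf \<beta>" using b by (simp add: \<beta>_def reg_Inf_iff)
  moreover have "kd f = kmul \<alpha> (kd tInf) + kmul \<beta> (kd sInf)"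
  proof -
    have "kd sInf = (0, fderiv s_coeff + s_coeff * fderiv fF / (2 * fF))" by (simp add: sInf_s_coeff kd_pair)
    thus ?thesis using r2 by (simp add: f kd_pair \<alpha>_def \<beta>_def kd_tInf fderiv_mult power2_eq_square field_simps)
  qed
  ultimately show ?thesis unfolding dreg_at.simps by blast
qed

lemma dreg_aff_mult_kY: assumes "on_curve a b" "dreg_at (Aff a b) w" shows "reg_at (Aff a b) (kmul w kY)"
proof -
  obtain \<alpha> \<beta> where ab: "reg_at (Aff a b) \<alpha>" "reg_at (Aff a b) \<beta>" "w = kmul \<alpha> (kd kX) + kmul \<beta> (kd kY)"
    using assms(2) by (auto simp: dreg_at.simps)
  have "kmul w kY = kmul \<alpha> kY + kmul \<beta> (fconst (- inverse (2::'k)), 0)"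
  proof -
    have "fconst 2 * fconst (inverse (2::'k)) = 1" using two_nz by (simp flip: fconst_mult)
    hence "inverse (fconst 2) = fconst (inverse (2::'k))" by (rule inverse_unique)
    hence i2: "fconst (- inverse 2) = - inverse (2::'k rat)" using two_fconst by (simp add: fconst_uminus)
    have 1: "kmul (kd kX) kY = kY" by (simp add: kd_kX kY_def)
    have "kmul (kd kY) kY = (- 1 / (2 * fF) * fF, 0::'k rat)" by (simp only: kd_kY) (simp add: kY_def)
    also have "\<dots> = (fconst (- inverse 2), 0)" using i2 fF_nz by (simp add: field_simps)
    finally have 2: "kmul (kd kY) kY = (fconst (- inverse (2::'k)), 0)" .
    show ?thesis by (simp only: ab(3) kmul_add_left kmul_assoc 1 2)
  qed
  moreover have "reg_at (Aff a b) kY" unfolding kY_def by (rule reg_aff_no_pole) simp_all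
  ultimately show ?thesis using ab assms(1) reg_aff_add reg_aff_mult reg_aff_const by metis
qed

lemma dreg_aff_kd: assumes "no_pole a r1" "no_pole a r2" shows "dreg_at (Aff a b) (kd (r1, r2))"
proof -
  have "kd (r1, r2) = kmul (fderiv r1, fderiv r2) (kd kX) + kmul (r2, 0) (kd kY)"
    by (simp add: kd_pair kd_kX kd_kY_fderiv)
  moreover have "reg_at (Aff a b) (fderiv r1, fderiv r2)" using assms by (intro reg_aff_no_pole no_pole_fderiv)
  moreover have "reg_at (Aff a b) (r2, 0)" using assms by (intro reg_aff_no_pole) simp_all
  ultimately show ?thesis unfolding dreg_at.simps by blast
qed

lemma U1_cases: "Q \<in> U1 \<Longrightarrow> Q = Inf \<or> (\<exists>a b. Q = Aff a b \<and> on_curve a b \<and> a \<noteq> (0::'k))"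
proof -
  assume "Q \<in> U1"
  hence Q: "Q \<in> Xpts" "Q \<noteq> Aff 0 0" by (auto simp: U1_def)
  show ?thesis
  proof (cases Q)
    case (Aff a b)
    hence o: "on_curve a b" using Q Aff_in_Xpts by simp
    have "a \<noteq> 0"
    proof
      assume "a = 0"
      hence "b ^ 2 = 0" using o char_gt2 by (simp add: on_curve_def)
      thus False using Q Aff \<open>a = 0\<close> by simp
    qed
    thus ?thesis using Aff o by blast
  qed simp
qed

lemma U2_cases: "Q \<in> U2 \<Longrightarrow> \<exists>a b. Q = Aff a b \<and> on_curve a (b::'k)"
proof -
  assume "Q \<in> U2"
  hence Q: "Q \<in> Xpts" "Q \<noteq> Inf" by (auto simp: U2_def)
  thus ?thesis by (cases Q) (auto simp: Aff_in_Xpts)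
qed

lemma U12_cases: "Q \<in> U1 \<inter> U2 \<Longrightarrow> \<exists>a b. Q = Aff a b \<and> on_curve a b \<and> a \<noteq> (0::'k)"
  using U1_cases U2_cases by (metis IntD1 IntD2 pt.distinct(1))
lemma Inf_U1: "(Inf::'k pt) \<in> U1" by (simp add: U1_def Xpts_def)
lemma Aff_U1: "on_curve a b \<Longrightarrow> a \<noteq> 0 \<Longrightarrow> Aff a b \<in> (U1::'k pt set)" by (simp add: U1_def Aff_in_Xpts)
lemma Aff_U2: "on_curve a b \<Longrightarrow> Aff a b \<in> (U2::'k pt set)" by (simp add: U2_def Aff_in_Xpts)

lemma kd_reg_U2:
  fixes f :: "'k fn"
  assumes "f \<in> regO U2"
  shows "kd f \<in> regOmega U2"
proof -
  have "\<forall>a b. on_curve a b \<longrightarrow> reg_at (Aff a b) f" using assms Aff_U2 by (auto simp: regO_def)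
  then obtain A B where "f = (to_fract A, to_fract B)" using reg_affine_poly by blast
  thus ?thesis unfolding regOmega_def by (auto dest!: U2_cases intro!: dreg_aff_kd)
qed

subsection \<open>The classes \<tau>_i and \<eta>_i are cocycles\<close>

definition tau_form :: "nat \<Rightarrow> 'k fn" where "tau_form i = (0, fx ^ i * inverse fF)"
lemma tau_eq: "tau K i = (tau_form i, tau_form i, 0)"
  by (simp add: tau_def tau_form_def kX_def kpow_rat kinv_kY Let_def)
definition eta_form1 :: "nat \<Rightarrow> 'k fn" where
  "eta_form1 i = kmul (fconst (of_int (1 - 2 * int i)) * inverse fx ^ (g + i - 1), 0) (kd sInf)"
definition eta_form2 :: "nat \<Rightarrow> 'k fn" where
  "eta_form2 i = kmul (fconst (of_int (- 2 * int i)) * fx ^ (2 * g - i), 0) (kd kY)"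
definition eta_fun :: "nat \<Rightarrow> 'k fn" where
  "eta_fun i = (0, inverse fx ^ i)"

lemma eta_eq: assumes "1 \<le> i" "i \<le> g" shows "eta K i = (eta_form1 i, eta_form2 i, eta_fun i)"
proof -
  have e1: "fx powi (1 - int g - int i) = (inverse fx ^ (g + i - 1) :: 'k rat)"
  proof -
    have "1 - int g - int i = - int (g + i - 1)" using assms by simp
    thus ?thesis by (simp only: power_int_minus_nat)
  qed
  have e2: "fx powi (2 * int g - int i) = (fx ^ (2 * g - i) :: 'k rat)"
  proof -
    have "2 * int g - int i = int (2 * g - i)" using assms by simp
    thus ?thesis by (simp only: power_int_of_nat)
  qed
  have e3: "fx powi (- int i) = (inverse fx ^ i :: 'k rat)" by (rule power_int_minus_nat)
  have e4: "kmul kY (kpowi kX (- int g - 1)) = (sInf :: 'k fn)"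
  proof -
    have h: "- int g - 1 = - 1 - int g" by simp
    show ?thesis by (simp only: h) (simp add: kpowi_kX kY_def sInf_s_coeff s_coeff_def)
  qed
  show ?thesis
    unfolding eta_def Let_def e4
    by (simp add: kpowi_kX kconst_eq e1 e2 e3 eta_form1_def eta_form2_def eta_fun_def kY_def kmul_rat_rat del: kmul_pair) simp
qed

lemma eta_cocycle:
  assumes "1 \<le> i" "i \<le> g"
  shows "kd (eta_fun i) = eta_form1 i - eta_form2 i"
proof -
  define u :: "'k rat" where "u = inverse fx ^ i"
  have u: "u * fx ^ i = 1" unfolding u_def by (rule inverse_fx_power_cancel)
  \<comment> \<open>the curve equation, divided by x^(i+1)\<close>
  have curve_eq: "fx ^ (2 * g - i) = u + u * inverse fx * fF"
  proof -
    have "p = (2 * g - i) + i + 1" using assms p_eq by simp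
    hence F: "fF = fx ^ (2 * g - i) * fx ^ i * fx - (fx :: 'k rat)"
      unfolding fF_def p_def[symmetric] by (simp only: power_add power_one_right)
    have "u * inverse fx * fF = fx ^ (2 * g - i) * (u * fx ^ i) - u"
      unfolding F by (simp add: field_simps)
    thus ?thesis using u by simp
  qed
  have "fderiv u = - (of_nat i * u * inverse fx)"
  proof -
    have "inverse fx ^ (i - 1) * inverse fx ^ 2 = u * (inverse fx :: 'k rat)"
      using assms by (simp add: u_def flip: power_add power_Suc2)
    moreover have "fderiv (inverse fx) = - (inverse fx ^ 2 :: 'k rat)"
      by (subst fderiv_inverse) (simp add: power2_eq_square field_simps)
    ultimately show ?thesis by (simp add: u_def fderiv_power mult.assoc)
  qed
  hence lhs: "kd (eta_fun i) = (0, - (of_nat i * u * inverse fx) - u / (2 * fF))"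
    by (simp add: eta_fun_def u_def kd_pair fderiv_fF)
  have "inverse fx ^ (g + i - 1) * fx ^ (g - 1) = u"
  proof -
    have "g + i - 1 = (g - 1) + i" using assms by simp
    hence "inverse fx ^ (g + i - 1) = inverse fx ^ (g - 1) * u" by (simp add: u_def power_add)
    thus ?thesis by (simp add: power_inverse)
  qed
  moreover have "fconst (1 - 2 * of_nat i) = (1 - 2 * of_nat i :: 'k rat)"
    using fconst_of_int[of "1 - 2 * int i"] by simp
  ultimately have rhs1: "eta_form1 i = (0, - ((1 - 2 * of_nat i) * u / (2 * fF)))"
    by (simp add: eta_form1_def kd_sInf ds_coeff_def mult.assoc)
  have "fconst (- (2 * of_nat i)) = (- (2 * of_nat i) :: 'k rat)"
    using fconst_of_int[of "- 2 * int i"] by simp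
  hence rhs2: "eta_form2 i = (0, of_nat i * fx ^ (2 * g - i) / fF)"
    using fF_nz two_nz_rat by (simp add: eta_form2_def kd_kY field_simps)
  show ?thesis
    unfolding lhs rhs1 rhs2 curve_eq using fF_nz two_nz_rat by (simp add: field_simps)
qed

lemma dreg_aff_kY: "dreg_at (Aff a b) (kd kY)"
  unfolding kY_def by (rule dreg_aff_kd) simp_all
lemma no_pole_s_coeff: "a \<noteq> (0::'k) \<Longrightarrow> no_pole a s_coeff"
  unfolding s_coeff_inv power_inverse[symmetric] by (intro no_pole_power no_pole_inverse_fx)
lemma dreg_aff_sInf: "a \<noteq> (0::'k) \<Longrightarrow> dreg_at (Aff a b) (kd sInf)"
  unfolding sInf_s_coeff by (rule dreg_aff_kd) (simp_all add: no_pole_s_coeff)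

lemma dreg_Inf_sInf: "dreg_at Inf (kd (sInf::'k fn))"
proof -
  have "reg_at Inf (sInf :: 'k fn)" using reg_Inf_s_multiple[of 1] by (simp add: sInf_s_coeff)
  thus ?thesis by (rule dreg_Inf_kd)
qed

lemma ds_multiple_reg_U1:
  fixes c :: "'k rat"
  assumes "\<And>a. a \<noteq> 0 \<Longrightarrow> no_pole a c" and "deg_le 0 c"
  shows "kmul (c, 0) (kd sInf) \<in> regOmega U1"
  unfolding regOmega_def
proof (intro CollectI ballI)
  fix Q :: "'k pt" assume "Q \<in> U1"
  then consider "Q = Inf" | a b where "Q = Aff a b" "on_curve a b" "a \<noteq> 0" using U1_cases by blast
  thus "dreg_at Q (kmul (c, 0) (kd sInf))"
  proof cases
    case 1
    have "reg_at Inf (c, 0)" using assms(2) by (simp add: reg_Inf_iff)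
    thus ?thesis using 1 dreg_Inf_mult[OF _ dreg_Inf_sInf] by simp
  next
    case 2
    have "reg_at (Aff a b) (c, 0)" using 2 assms(1) by (intro reg_aff_no_pole) simp_all
    thus ?thesis using 2 dreg_aff_mult[OF _ _ dreg_aff_sInf] by simp
  qed
qed

lemma dy_multiple_reg_U2:
  fixes c :: "'k rat"
  assumes "\<And>a. no_pole a c"
  shows "kmul (c, 0) (kd kY) \<in> regOmega U2"
  unfolding regOmega_def
proof (intro CollectI ballI)
  fix Q :: "'k pt" assume "Q \<in> U2"
  then obtain a b where "Q = Aff a b" "on_curve a b" using U2_cases by blast
  moreover have "reg_at (Aff a b) (c, 0)" using assms by (intro reg_aff_no_pole) simp_all
  ultimately show "dreg_at Q (kmul (c, 0) (kd kY))" using dreg_aff_mult[OF _ _ dreg_aff_kY] by simp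
qed

lemma tau_form_dy: "tau_form i = kmul (fconst (-2) * fx ^ i, 0) (kd kY)"
  using fF_nz two_nz_rat by (simp add: tau_form_def kd_kY fconst_m2 field_simps)

lemma tau_form_ds:
  assumes "i < g"
  shows "tau_form i = kmul (fconst (-2) * inverse fx ^ (g - 1 - i), 0) (kd sInf)"
proof -
  have "fx ^ (g - 1) = fx ^ i * (fx ^ (g - 1 - i) :: 'k rat)"
    using assms by (simp flip: power_add)
  hence "kmul (fconst (-2) * inverse fx ^ (g - 1 - i), 0) (kd (sInf :: 'k fn))
      = (0, (inverse fx ^ (g - 1 - i) * fx ^ (g - 1 - i)) * fx ^ i / fF)"
    using fF_nz two_nz_rat by (simp add: kd_sInf ds_coeff_def fconst_m2 field_simps)
  thus ?thesis by (simp add: tau_form_def inverse_fx_power_cancel divide_inverse)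
qed

lemma ZdR_iff: "(w1, w2, f) \<in> ZdR \<longleftrightarrow> w1 \<in> regOmega U1 \<and> w2 \<in> regOmega U2 \<and> f \<in> regO (U1 \<inter> U2) \<and> kd f = w1 - w2"
  by (simp add: ZdR_def)

lemma tau_ZdR:
  assumes "i < g"
  shows "tau K i \<in> ZdR"
proof -
  have "tau_form i \<in> regOmega U1"
    unfolding tau_form_ds[OF assms] using deg_le_mult[OF deg_le_fconst deg_le_inv_pow]
    by (intro ds_multiple_reg_U1) (simp_all add: no_pole_mult no_pole_power no_pole_inverse_fx)
  moreover have "tau_form i \<in> regOmega U2"
    unfolding tau_form_dy by (intro dy_multiple_reg_U2) (simp add: no_pole_mult no_pole_power)
  moreover have "(0::'k fn) \<in> regO (U1 \<inter> U2)"
    unfolding regO_def using U12_cases reg_aff_0 by blast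
  ultimately show ?thesis by (simp add: tau_eq ZdR_iff)
qed

lemma eta_ZdR:
  assumes "1 \<le> i" "i \<le> g"
  shows "eta K i \<in> ZdR"
proof -
  have "eta_form1 i \<in> regOmega U1"
    unfolding eta_form1_def using deg_le_mult[OF deg_le_fconst deg_le_inv_pow]
    by (intro ds_multiple_reg_U1) (simp_all add: no_pole_mult no_pole_power no_pole_inverse_fx)
  moreover have "eta_form2 i \<in> regOmega U2"
    unfolding eta_form2_def by (intro dy_multiple_reg_U2) (simp add: no_pole_mult no_pole_power)
  moreover have "eta_fun i \<in> regO (U1 \<inter> U2)"
    unfolding regO_def eta_fun_def
    by (auto dest!: U12_cases intro!: reg_aff_no_pole simp: no_pole_power no_pole_inverse_fx)
  ultimately show ?thesis using eta_cocycle[OF assms] by (simp add: eta_eq[OF assms] ZdR_iff)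
qed

definition eta_poly :: "(nat \<Rightarrow> 'k) \<Rightarrow> 'k poly" where "eta_poly e = (\<Sum>i\<in>{1..g}. monom (e i) (g - i))"

lemma eta_poly_eval: "to_fract (eta_poly e) / fx ^ g = (\<Sum>i\<in>{1..g}. fconst (e i) * inverse fx ^ i)"
proof -
  have "to_fract (eta_poly e) / fx ^ g = (\<Sum>i\<in>{1..g}. fconst (e i) * fx ^ (g - i) / fx ^ g)"
    by (simp add: eta_poly_def to_fract_monom sum_divide_distrib)
  also have "\<dots> = (\<Sum>i\<in>{1..g}. fconst (e i) * inverse fx ^ i)"
  proof (rule sum.cong)
    fix i assume "i \<in> {1..g}"
    hence "fx ^ g = fx ^ (g - i) * (fx ^ i :: 'k rat)" by (simp flip: power_add)
    thus "fconst (e i) * fx ^ (g - i) / fx ^ g = fconst (e i) * inverse fx ^ i"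
      by (simp add: field_simps power_inverse)
  qed simp
  finally show ?thesis .
qed

lemma coeff_eta_poly: "coeff (eta_poly e) k = (if k < g then e (g - k) else 0)"
proof -
  have "coeff (eta_poly e) k = (\<Sum>i\<in>{1..g}. if g - i = k then e i else 0)"
    by (simp add: eta_poly_def coeff_sum coeff_monom)
  also have "\<dots> = (\<Sum>i\<in>{1..g}. if i = g - k \<and> k < g then e i else 0)"
    by (rule sum.cong) auto
  also have "\<dots> = (if k < g then e (g - k) else 0)"
  proof (cases "k < g")
    case True
    hence "g - k \<in> {1..g}" by auto
    thus ?thesis using True by (simp add: sum.delta')
  next
    case False thus ?thesis by simp
  qed
  finally show ?thesis .
qed

lemma eta_poly_coeff: assumes "Q = 0 \<or> degree Q < g" shows "eta_poly (\<lambda>i. coeff Q (g - i)) = Q"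
proof (rule poly_eqI)
  fix k show "coeff (eta_poly (\<lambda>i. coeff Q (g - i))) k = coeff Q k"
  proof (cases "k < g")
    case True thus ?thesis by (simp add: coeff_eta_poly)
  next
    case False
    hence "coeff Q k = 0" using assms by (auto intro: coeff_eq_0)
    thus ?thesis using False by (simp add: coeff_eta_poly)
  qed
qed

lemma sum_tau: "(\<Sum>i<g. tsmul (c i) (tau K i)) = (\<Sum>i<g. ksmul (c i) (tau_form i), \<Sum>i<g. ksmul (c i) (tau_form i), 0)"
  by (simp add: tau_eq tsmul_triple sum_triple)

lemma sum_eta: "(\<Sum>i=1..g. tsmul (e i) (eta K i)) =
   (\<Sum>i=1..g. ksmul (e i) (eta_form1 i), \<Sum>i=1..g. ksmul (e i) (eta_form2 i), \<Sum>i=1..g. ksmul (e i) (eta_fun i))"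
proof -
  have "(\<Sum>i=1..g. tsmul (e i) (eta K i)) = (\<Sum>i=1..g. (ksmul (e i) (eta_form1 i), ksmul (e i) (eta_form2 i), ksmul (e i) (eta_fun i)))"
    by (rule sum.cong) (simp_all add: eta_eq tsmul_triple)
  thus ?thesis by (simp add: sum_triple)
qed

lemma sum_eta_fun: "(\<Sum>i=1..g. ksmul (e i) (eta_fun i)) = (0, to_fract (eta_poly e) / fx ^ g)"
proof -
  have "(\<Sum>i=1..g. ksmul (e i) (eta_fun i)) = (\<Sum>i=1..g. (0, fconst (e i) * inverse fx ^ i))"
    by (simp add: eta_fun_def)
  also have "\<dots> = (0, \<Sum>i=1..g. fconst (e i) * inverse fx ^ i)"
    by (simp add: prod_eq_iff fst_sum snd_sum)
  finally show ?thesis by (simp add: eta_poly_eval)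
qed

lemma sum_tau_form: "(\<Sum>i<n. ksmul (c i) (tau_form i)) = (0, (\<Sum>i<n. fconst (c i) * fx ^ i) * inverse fF)"
proof -
  have "(\<Sum>i<n. ksmul (c i) (tau_form i)) = (\<Sum>i<n. (0, fconst (c i) * fx ^ i * inverse fF))"
    by (simp add: tau_form_def mult.assoc)
  also have "\<dots> = (0, (\<Sum>i<n. fconst (c i) * fx ^ i) * inverse fF)"
    by (simp add: prod_eq_iff fst_sum snd_sum sum_distrib_right)
  finally show ?thesis .
qed

lemma eta_form1_U1: "1 \<le> i \<Longrightarrow> i \<le> g \<Longrightarrow> eta_form1 i \<in> regOmega U1"
  using eta_ZdR[of i] by (simp add: eta_eq ZdR_iff)
lemma eta_form2_U2: "1 \<le> i \<Longrightarrow> i \<le> g \<Longrightarrow> eta_form2 i \<in> regOmega U2"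
  using eta_ZdR[of i] by (simp add: eta_eq ZdR_iff)

subsection \<open>Spanning\<close>

lemma laurent_tail_reg_U1:
  fixes A R :: "'k poly"
  assumes "A = 0 \<or> degree A < m" and "R = 0 \<or> degree R < m - g"
  shows "(to_fract A / fx ^ m, to_fract R / fx ^ m) \<in> regO U1"
  unfolding regO_def
proof (intro CollectI ballI)
  fix P :: "'k pt" assume "P \<in> U1"
  then consider "P = Inf" | a b where "P = Aff a b" "on_curve a b" "a \<noteq> 0" using U1_cases by blast
  thus "reg_at P (to_fract A / fx ^ m, to_fract R / fx ^ m)"
  proof cases
    case 1
    have "deg_le 0 (to_fract A / fx ^ m)" using assms(1) by (intro deg_le_laurent) auto
    moreover have "deg_le 0 (to_fract (R * [:0,1:] ^ (g + 1)) / fx ^ m)"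
      using assms(2) by (intro deg_le_laurent) (auto simp: degree_mult_eq degree_x_power)
    moreover have "to_fract (R * [:0,1:] ^ (g + 1)) / fx ^ m = to_fract R / fx ^ m * fx ^ (g + 1)"
      by (simp only: to_fract_mult to_fract_x_power) simp
    ultimately show ?thesis unfolding 1 reg_Inf_iff by simp
  next
    case 2
    thus ?thesis by (simp add: reg_aff_no_pole no_pole_laurent)
  qed
qed

lemma poly_pair_reg_U2: "(to_fract A, to_fract B :: 'k rat) \<in> regO U2"
  unfolding regO_def by (auto dest!: U2_cases intro!: reg_aff_no_pole)

lemma cech_split:
  fixes f :: "'k fn"
  assumes "f \<in> regO (U1 \<inter> U2)"
  obtains e f1 f2 where "f1 \<in> regO U1" and "f2 \<in> regO U2"
    and "f - (\<Sum>i=1..g. ksmul (e i) (eta_fun i)) = f1 - f2"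
proof -
  have "\<forall>a b. on_curve a b \<and> a \<noteq> 0 \<longrightarrow> reg_at (Aff a b) f"
    using assms Aff_U1 Aff_U2 by (auto simp: regO_def)
  then obtain A B m0 where f0: "f = (to_fract A / fx ^ m0, to_fract B / fx ^ m0)"
    using reg_off_0_laurent by blast
  define m where "m = m0 + g"
  have f: "f = (to_fract (A * [:0,1:] ^ g) / fx ^ m, to_fract (B * [:0,1:] ^ g) / fx ^ m)"
    using f0 by (simp add: m_def to_fract_x_power power_add)
  obtain Ha Qa Ra where A: "to_fract (A * [:0,1:] ^ g) / fx ^ m = to_fract Ha + to_fract Qa / fx ^ 0 + to_fract Ra / fx ^ m"
    and Qa: "Qa = 0 \<or> degree Qa < 0" and Ra: "Ra = 0 \<or> degree Ra < m - 0"
    using laurent_split[of 0 m "A * [:0,1:] ^ g"] by blast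
  obtain Hb Q R where B: "to_fract (B * [:0,1:] ^ g) / fx ^ m = to_fract Hb + to_fract Q / fx ^ g + to_fract R / fx ^ m"
    and Q: "Q = 0 \<or> degree Q < g" and R: "R = 0 \<or> degree R < m - g"
    using laurent_split[of g m "B * [:0,1:] ^ g"] by (auto simp: m_def)
  define e where "e = (\<lambda>i. coeff Q (g - i))"
  have "(\<Sum>i=1..g. ksmul (e i) (eta_fun i)) = (0, to_fract Q / fx ^ g)"
    using sum_eta_fun[of e] eta_poly_coeff[OF Q] by (simp add: e_def)
  hence "f - (\<Sum>i=1..g. ksmul (e i) (eta_fun i))
      = (to_fract Ra / fx ^ m, to_fract R / fx ^ m) - (to_fract (- Ha), to_fract (- Hb))"
    using A B Qa by (simp add: f)
  moreover have "(to_fract Ra / fx ^ m, to_fract R / fx ^ m) \<in> regO U1"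
    using laurent_tail_reg_U1[OF _ R] Ra by simp
  ultimately show thesis using that poly_pair_reg_U2 by blast
qed

lemma kd_sum_eta_fun: "kd (\<Sum>i=1..g. ksmul (e i) (eta_fun i)) = (\<Sum>i=1..g. ksmul (e i) (eta_form1 i)) - (\<Sum>i=1..g. ksmul (e i) (eta_form2 i))"
proof -
  have "kd (\<Sum>i=1..g. ksmul (e i) (eta_fun i)) = (\<Sum>i=1..g. ksmul (e i) (eta_form1 i) - ksmul (e i) (eta_form2 i))"
    unfolding kd_sum by (rule sum.cong) (simp_all add: kd_ksmul eta_cocycle ksmul_diff)
  thus ?thesis by (simp add: sum_subtractf)
qed

lemma dreg_Inf_mult_kY:
  assumes "dreg_at Inf (w :: 'k fn)"
  shows "reg_at Inf (kmul (kmul w kY) (fconst (-2) * inverse fx ^ (g - 1), 0))"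
proof -
  define c :: "'k rat" where "c = fconst (-2) * inverse fx ^ (g - 1)"
  obtain \<gamma> where \<gamma>: "reg_at Inf \<gamma>" "w = kmul \<gamma> (kd sInf)" using dreg_Inf_obtain[OF assms] by blast
  have "ds_coeff * fF * c = fx ^ (g - 1) * inverse fx ^ (g - 1) * (fconst (-2) * (- 1 / 2))"
    using fF_nz two_nz_rat by (simp add: ds_coeff_def c_def field_simps)
  also have "fconst (-2) * (- 1 / 2) = (1::'k rat)" using fconst_m2 two_nz_rat by simp
  finally have "kmul (kmul (kd sInf) kY) (c, 0) = (1, 0)"
    using inverse_fx_power_cancel[of "g - 1"] by (simp add: kd_sInf kY_def mult.commute)
  hence "kmul (kmul w kY) (c, 0) = \<gamma>"
    unfolding \<gamma>(2) by (simp only: kmul_assoc) (metis kmul_comm kmul_1_left)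
  thus ?thesis using \<gamma>(1) by (simp add: c_def)
qed

lemma reg_Inf_poly_pair_scaled:
  fixes P P2 :: "'k poly" and c :: "'k rat"
  assumes "reg_at Inf (to_fract P * c, to_fract P2 * c)" and "c = fconst (-2) * inverse fx ^ (g - 1)"
  shows "(P = 0 \<or> degree P < g) \<and> P2 = 0"
proof -
  have cnz: "c \<noteq> 0" using two_nz assms(2) by simp
  have fc: "fract_deg c = - int (g - 1)"
    using two_nz assms(2) by (simp add: fract_deg_mult fract_deg_fconst fract_deg_power fract_deg_inverse fract_deg_fx)
  have "P = 0 \<or> degree P < g"
  proof (cases "P = 0")
    case False
    have "deg_le 0 (to_fract P * c)" using assms(1) by (simp add: reg_Inf_iff)
    hence "int (degree P) - int (g - 1) \<le> 0" using False cnz fc by (simp add: deg_le_def fract_deg_mult fract_deg_to_fract)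
    thus ?thesis using g_pos by auto
  qed simp
  moreover have "P2 = 0"
  proof (rule ccontr)
    assume nz: "P2 \<noteq> 0"
    have "deg_le 0 (to_fract P2 * c * fx ^ (g + 1))" using assms(1) by (simp add: reg_Inf_iff)
    moreover have "fract_deg (to_fract P2 * c * fx ^ (g + 1)) = int (degree P2) + 2"
      using nz cnz fc g_pos by (simp add: fract_deg_mult fract_deg_to_fract fract_deg_power fract_deg_fx)
    ultimately show False using nz cnz by (simp add: deg_le_def)
  qed
  ultimately show ?thesis ..
qed

lemma regular_form_eq:
  fixes w :: "'k fn"
  assumes aff: "\<And>a b. on_curve a b \<Longrightarrow> dreg_at (Aff a b) w" and inf: "dreg_at Inf w"
  obtains P where "P = 0 \<or> degree P < g" and "w = (0, to_fract P * inverse fF)"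
proof -
  have "\<forall>a b. on_curve a b \<longrightarrow> reg_at (Aff a b) (kmul w kY)" using aff dreg_aff_mult_kY by blast
  then obtain P P2 where H: "kmul w kY = (to_fract P, to_fract P2)" using reg_affine_poly by blast
  have P: "(P = 0 \<or> degree P < g) \<and> P2 = 0"
    using dreg_Inf_mult_kY[OF inf] by (intro reg_Inf_poly_pair_scaled) (simp_all add: H)
  have w: "w = kmul (kmul w kY) (kinv kY)"
  proof -
    have "kmul kY (kinv kY) = (1, 0::'k rat)" using fF_nz by (simp only: kinv_kY) (simp add: kY_def)
    hence "kmul w (kmul kY (kinv kY)) = w" by (subst kmul_comm) simp
    thus ?thesis by (simp only: kmul_assoc)
  qed
  from w[unfolded H] P have "w = (0, to_fract P * inverse fF)" by (simp add: kinv_kY)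
  with P that show thesis by blast
qed

lemma tau_form_span:
  fixes w :: "'k fn"
  assumes "\<And>a b. on_curve a b \<Longrightarrow> dreg_at (Aff a b) w" and "dreg_at Inf w"
  obtains c where "(\<Sum>i<g. ksmul (c i) (tau_form i)) = w"
proof -
  obtain P where P: "P = 0 \<or> degree P < g" and w: "w = (0, to_fract P * inverse fF)"
    using regular_form_eq[OF assms] .
  have "(\<Sum>i<g. ksmul (coeff P i) (tau_form i)) = w"
    unfolding sum_tau_form w using to_fract_expand[OF P] by simp
  with that show thesis .
qed

lemma ZdR_spanned:
  assumes "z \<in> (ZdR :: 'k triple set)"
  shows "\<exists>c e. z - (\<Sum>i<g. tsmul (c i) (tau K i)) - (\<Sum>i=1..g. tsmul (e i) (eta K i)) \<in> BdR"
proof -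
  obtain w1 w2 f where z: "z = (w1, w2, f)" by (cases z)
  have hw1: "w1 \<in> regOmega U1" and hw2: "w2 \<in> regOmega U2" and hf: "f \<in> regO (U1 \<inter> U2)"
    and hd: "kd f = w1 - w2" using assms z by (simp_all add: ZdR_iff)
  obtain e f1 f2 where f1: "f1 \<in> regO U1" and f2: "f2 \<in> regO U2"
    and dec: "f - (\<Sum>i=1..g. ksmul (e i) (eta_fun i)) = f1 - f2"
    using cech_split[OF hf] by blast
  define S1 S2 where "S1 = (\<Sum>i=1..g. ksmul (e i) (eta_form1 i))" and "S2 = (\<Sum>i=1..g. ksmul (e i) (eta_form2 i))"
  define W where "W = w2 - S2 - kd f2"
  have W1: "W = w1 - S1 - kd f1"
  proof -
    have "w1 - w2 - (S1 - S2) = kd f1 - kd f2"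
      using arg_cong[OF dec, of kd] hd kd_sum_eta_fun[of e] by (simp add: kd_diff S1_def S2_def)
    thus ?thesis by (simp add: W_def algebra_simps)
  qed
  have aff: "dreg_at (Aff a b) W" if o: "on_curve a b" for a b
  proof -
    have "dreg_at (Aff a b) w2" using hw2 Aff_U2[OF o] by (simp add: regOmega_def)
    moreover have "dreg_at (Aff a b) S2" unfolding S2_def
      using eta_form2_U2 Aff_U2[OF o] by (intro dreg_aff_sum[OF o] dreg_aff_ksmul[OF o]) (auto simp: regOmega_def)
    moreover have "dreg_at (Aff a b) (kd f2)" using kd_reg_U2[OF f2] Aff_U2[OF o] by (simp add: regOmega_def)
    ultimately show ?thesis unfolding W_def using o by (intro dreg_aff_diff) auto
  qed
  have inf: "dreg_at Inf W"
  proof -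
    have "dreg_at Inf w1" using hw1 Inf_U1 by (simp add: regOmega_def)
    moreover have "dreg_at Inf S1" unfolding S1_def
      using eta_form1_U1 Inf_U1 by (intro dreg_Inf_sum dreg_Inf_ksmul) (auto simp: regOmega_def)
    moreover have "dreg_at Inf (kd f1)" using f1 Inf_U1 by (intro dreg_Inf_kd) (simp add: regO_def)
    ultimately show ?thesis unfolding W1 by (intro dreg_Inf_diff) auto
  qed
  obtain c where tau_form: "(\<Sum>i<g. ksmul (c i) (tau_form i)) = W"
    using tau_form_span[OF aff inf] .
  have "z - (\<Sum>i<g. tsmul (c i) (tau K i)) - (\<Sum>i=1..g. tsmul (e i) (eta K i)) = (kd f1, kd f2, f1 - f2)"
    unfolding sum_tau sum_eta tau_form z
    using W1 dec by (simp add: W_def S1_def S2_def algebra_simps)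
  moreover have "(kd f1, kd f2, f1 - f2) \<in> BdR" unfolding BdR_def
    by (rule CollectI, rule exI[of _ f1], rule exI[of _ f2]) (simp add: f1 f2)
  ultimately have "z - (\<Sum>i<g. tsmul (c i) (tau K i)) - (\<Sum>i=1..g. tsmul (e i) (eta K i)) \<in> BdR" by simp
  thus ?thesis by blast
qed

subsection \<open>Linear independence\<close>

lemma eta_fun_split_trivial:
  fixes f1 f2 :: "'k fn"
  assumes f1: "f1 \<in> regO U1" and f2: "f2 \<in> regO U2"
    and split: "(\<Sum>i=1..g. ksmul (e i) (eta_fun i)) = f1 - f2"
  shows "(\<forall>i\<in>{1..g}. e i = 0) \<and> kd f2 = 0"
proof -
  have "\<forall>a b. on_curve a b \<longrightarrow> reg_at (Aff a b) f2" using f2 Aff_U2 by (auto simp: regO_def)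
  then obtain P Q where f2PQ: "f2 = (to_fract P, to_fract Q)" using reg_affine_poly by blast
  have "f1 = (to_fract P, to_fract Q + to_fract (eta_poly e) / fx ^ g)"
    using split[unfolded sum_eta_fun] f2PQ by (simp add: prod_eq_iff algebra_simps)
  hence reg: "reg_at Inf (to_fract P, to_fract Q + to_fract (eta_poly e) / fx ^ g)"
    using f1 Inf_U1 by (simp add: regO_def)
  define N where "N = (Q * [:0,1:] ^ g + eta_poly e) * [:0,1:]"
  have "to_fract N = (to_fract Q * fx ^ g + to_fract (eta_poly e)) * fx"
    unfolding N_def by (simp only: to_fract_mult to_fract_add to_fract_x_power fx_eq_to_fract)
  hence "(to_fract Q + to_fract (eta_poly e) / fx ^ g) * fx ^ (g + 1) = to_fract N"
    by (simp add: field_simps power_add)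
  hence bounded: "deg_le 0 (to_fract N)" using reg by (simp add: reg_Inf_iff)
  have "N = 0"
  proof (rule ccontr)
    assume nz: "N \<noteq> 0"
    hence "Q * [:0,1:] ^ g + eta_poly e \<noteq> 0" by (auto simp: N_def)
    hence "degree N \<ge> 1" by (simp add: N_def degree_mult_eq)
    thus False using bounded nz by (simp add: deg_le_def fract_deg_to_fract)
  qed
  hence QP: "Q * [:0,1:] ^ g + eta_poly e = 0" by (simp add: N_def)
  have e0: "e i = 0" if i: "i \<in> {1..g}" for i
  proof -
    have "coeff (Q * [:0,1:] ^ g) (g - i) = coeff (monom 1 g * Q) (g - i)"
      by (simp add: monom_altdef mult.commute)
    also have "\<dots> = 0" using i by (simp add: coeff_monom_mult)
    finally have "coeff (Q * [:0,1:] ^ g) (g - i) = 0" .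
    hence "coeff (eta_poly e) (g - i) = 0" using arg_cong[OF QP, of "\<lambda>q. coeff q (g - i)"] by simp
    thus ?thesis using i by (simp add: coeff_eta_poly)
  qed
  hence "eta_poly e = 0" by (simp add: eta_poly_def)
  hence "Q = 0" using QP by simp
  have "deg_le 0 (to_fract P)" using reg by (simp add: reg_Inf_iff)
  hence "degree P = 0" by (cases "P = 0") (auto simp: deg_le_def fract_deg_to_fract)
  then obtain p0 where "P = [:p0:]" by (rule degree_eq_zeroE)
  hence "pderiv P = 0" by simp
  hence "kd f2 = 0" using \<open>Q = 0\<close> by (simp add: f2PQ kd_pair zero_prod_def)
  thus ?thesis using e0 by blast
qed

lemma tau_eta_independent:
  assumes "(\<Sum>i<g. tsmul (c i) (tau K i)) + (\<Sum>i=1..g. tsmul (e i) (eta K i)) \<in> (BdR :: 'k triple set)"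
  shows "(\<forall>i<g. c i = 0) \<and> (\<forall>i\<in>{1..g}. e i = 0)"
proof -
  define T where "T = (\<Sum>i<g. ksmul (c i) (tau_form i))"
  obtain f1 f2 where f1: "f1 \<in> regO U1" and f2: "f2 \<in> regO U2"
    and d2: "T + (\<Sum>i=1..g. ksmul (e i) (eta_form2 i)) = kd f2"
    and split: "(\<Sum>i=1..g. ksmul (e i) (eta_fun i)) = f1 - f2"
    using assms unfolding sum_tau sum_eta T_def BdR_def by auto
  have e0: "\<forall>i\<in>{1..g}. e i = 0" and "kd f2 = 0"
    using eta_fun_split_trivial[OF f1 f2 split] by auto
  hence "T = 0" using d2 by simp
  hence "(\<Sum>i<g. fconst (c i) * fx ^ i) = (0::'k rat)"
    using fF_nz by (simp add: T_def sum_tau_form zero_prod_def)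
  thus ?thesis using e0 sum_fconst_x_powers_eq_0 by blast
qed

end

theorem lemma3p2:
  fixes K :: "'k::alg_closed_field itself"
  assumes "CHAR('k) > 2"
  shows "(\<forall>i < genus K. tau K i \<in> ZdR) \<and> (\<forall>i \<in> {1..genus K}. eta K i \<in> ZdR) \<and>
    (\<forall>z \<in> (ZdR :: 'k triple set). \<exists>c e.
       z - (\<Sum>i<genus K. tsmul (c i) (tau K i)) - (\<Sum>i=1..genus K. tsmul (e i) (eta K i)) \<in> BdR) \<and>
    (\<forall>c e. (\<Sum>i<genus K. tsmul (c i) (tau K i)) + (\<Sum>i=1..genus K. tsmul (e i) (eta K i)) \<in> (BdR :: 'k triple set)
       \<longrightarrow> (\<forall>i < genus K. c i = 0) \<and> (\<forall>i \<in> {1..genus K}. e i = 0))"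
proof -
  interpret curve K using assms by unfold_locales
  show ?thesis
    using tau_ZdR eta_ZdR ZdR_spanned tau_eta_independent by auto
qed

end
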